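(* $\mathrm{QSym}_B$, with the power series product, unit $1=M_\emptyset$, coproduct $\Delta_B(M_{(\alpha_1,\dots,\alpha_k)})=\sum_{i=0}^kM_{(\alpha_1,\dots,\alpha_i)}\otimes M_{(\alpha_{i+1},\dots,\alpha_k)}$ and counit $\epsilon_B(M_\alpha)=\delta_{\alpha,\emptyset}$, is a Hopf algebra whose antipode $S_B$ is given by $$S_B(M_\alpha)=(-1)^{\ell(\alpha)}\sum_{J\models\ell(\alpha)}M_{J\circ\alpha^r}$$ for every $B$-composition $\alpha$.
   Context: $\mathbf{k}$ is a commutative ring containing $\mathbb{Q}$. $B$ is a commutative monoid written additively with identity $0$, additively finite (each $a\in B$ is $b+c$ for only finitely many $(b,c)\in B^2$) and such that $B\setminus\{0\}$ is closed under addition. $X=\{x_1<x_2<\cdots\}$; $\mathbf k[[X]]_B$ is the algebra of possibly infinite $\mathbf k$-linear combinations of formal monomials $\prod x^{f(x)}$, $f:X\to B$ finitely supported, multiplied by adding exponents. A $B$-composition is a finite (possibly empty, $\emptyset$) sequence $\alpha=(\alpha_1,\dots,\alpha_k)$ of elements of $B\setminus\{0\}$, $\ell(\alpha)=k$, $\alpha^r=(\alpha_k,\dots,\alpha_1)$. $M_\alpha=\sum_{1\le i_1<\cdots<i_k}x_{i_1}^{\alpha_1}\cdots x_{i_k}^{\alpha_k}$, $M_\emptyset=1$; these are linearly independent and their $\mathbf k$-span $\mathrm{QSym}_B$ is a subalgebra of $\mathbf k[[X]]_B$. For a sequence $J=(j_1,\dots,j_l)$ of positive integers with sum $k$ (written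 $J\models k$; for $k=0$ only the empty $J$), $J\circ\alpha=(\alpha_1+\cdots+\alpha_{j_1},\alpha_{j_1+1}+\cdots+\alpha_{j_1+j_2},\dots,\alpha_{j_1+\cdots+j_{l-1}+1}+\cdots+\alpha_k)$; the sum over $J$ counts each $J$ separately. *)

theory Defs
  imports "HOL-Library.Poly_Mapping"
begin

typedef (overloaded) ('b::zero) bcomp = "{xs::'b list. 0 \<notin> set xs}"
  by (rule exI[of _ "[]"]) simp

text \<open>Monomials: finitely supported exponent functions X -> B, with X = {x_0 < x_1 < ...}
  indexed by nat. A formal power series in k[[X]]_B is its coefficient function.\<close>

definition Mser :: "'b::comm_monoid_add bcomp \<Rightarrow> (nat \<Rightarrow>\<^sub>0 'b) \<Rightarrow> 'k::comm_semiring_1" where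
  "Mser a f = of_nat (card {is. length is = length (Rep_bcomp a) \<and> sorted_wrt (<) is \<and>
      f = (\<Sum>j<length is. Poly_Mapping.single (is ! j) (Rep_bcomp a ! j))})"

definition pmult :: "((nat \<Rightarrow>\<^sub>0 'b::comm_monoid_add) \<Rightarrow> 'k::comm_semiring_1)
    \<Rightarrow> ((nat \<Rightarrow>\<^sub>0 'b) \<Rightarrow> 'k) \<Rightarrow> ((nat \<Rightarrow>\<^sub>0 'b) \<Rightarrow> 'k)" where
  "pmult F G = (\<lambda>h. \<Sum>p\<in>{(f, g). f + g = h}. F (fst p) * G (snd p))"

definition pone :: "(nat \<Rightarrow>\<^sub>0 'b::comm_monoid_add) \<Rightarrow> 'k::comm_semiring_1" where
  "pone = (\<lambda>h. if h = 0 then 1 else 0)"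

text \<open>Elements of QSym_B are represented by their (finitely supported) coordinates in the
  M-basis; ser maps coordinates to the power series sum c_alpha M_alpha.\<close>
definition ser :: "('b::comm_monoid_add bcomp \<Rightarrow>\<^sub>0 'k::comm_semiring_1) \<Rightarrow> (nat \<Rightarrow>\<^sub>0 'b) \<Rightarrow> 'k" where
  "ser c = (\<lambda>f. \<Sum>a\<in>Poly_Mapping.keys c. Poly_Mapping.lookup c a * Mser a f)"

definition qsmult :: "'k::comm_semiring_1 \<Rightarrow> ('a \<Rightarrow>\<^sub>0 'k) \<Rightarrow> ('a \<Rightarrow>\<^sub>0 'k)" where
  "qsmult r c = (\<Sum>a\<in>Poly_Mapping.keys c. Poly_Mapping.single a (r * Poly_Mapping.lookup c a))"

definition qmult :: "('b::comm_monoid_add bcomp \<Rightarrow>\<^sub>0 'k::comm_semiring_1)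
    \<Rightarrow> ('b bcomp \<Rightarrow>\<^sub>0 'k) \<Rightarrow> ('b bcomp \<Rightarrow>\<^sub>0 'k)" where
  "qmult a b = (THE c. ser c = pmult (ser a) (ser b))"

definition qunit :: "'b::zero bcomp \<Rightarrow>\<^sub>0 'k::comm_semiring_1" where
  "qunit = Poly_Mapping.single (Abs_bcomp []) 1"

definition bc_take :: "nat \<Rightarrow> 'b::zero bcomp \<Rightarrow> 'b bcomp" where
  "bc_take i a = Abs_bcomp (take i (Rep_bcomp a))"

definition bc_drop :: "nat \<Rightarrow> 'b::zero bcomp \<Rightarrow> 'b bcomp" where
  "bc_drop i a = Abs_bcomp (drop i (Rep_bcomp a))"

text \<open>Coproduct Delta_B, extended linearly; QSym_B (x) QSym_B has basis M_alpha (x) M_beta.\<close>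
definition qcomul :: "('b::zero bcomp \<Rightarrow>\<^sub>0 'k::comm_semiring_1) \<Rightarrow> ('b bcomp \<times> 'b bcomp \<Rightarrow>\<^sub>0 'k)" where
  "qcomul c = (\<Sum>a\<in>Poly_Mapping.keys c. \<Sum>i\<in>{0..length (Rep_bcomp a)}.
      Poly_Mapping.single (bc_take i a, bc_drop i a) (Poly_Mapping.lookup c a))"

definition qcounit :: "('b::zero bcomp \<Rightarrow>\<^sub>0 'k::comm_semiring_1) \<Rightarrow> 'k" where
  "qcounit c = Poly_Mapping.lookup c (Abs_bcomp [])"

fun jcomp :: "nat list \<Rightarrow> 'b::monoid_add list \<Rightarrow> 'b list" where
  "jcomp [] xs = []"
| "jcomp (j # J) xs = sum_list (take j xs) # jcomp J (drop j xs)"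

definition nat_compositions :: "nat \<Rightarrow> nat list set" where
  "nat_compositions k = {J. sum_list J = k \<and> (\<forall>j\<in>set J. 0 < j)}"

definition qantipode :: "('b::comm_monoid_add bcomp \<Rightarrow>\<^sub>0 'k::comm_ring_1) \<Rightarrow> ('b bcomp \<Rightarrow>\<^sub>0 'k)" where
  "qantipode c = (\<Sum>a\<in>Poly_Mapping.keys c. \<Sum>J\<in>nat_compositions (length (Rep_bcomp a)).
      Poly_Mapping.single (Abs_bcomp (jcomp J (rev (Rep_bcomp a))))
        ((- 1) ^ length (Rep_bcomp a) * Poly_Mapping.lookup c a))"

definition tunit :: "('b::zero bcomp \<times> 'b bcomp \<Rightarrow>\<^sub>0 'k::comm_semiring_1)" where
  "tunit = Poly_Mapping.single (Abs_bcomp [], Abs_bcomp []) 1"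

text \<open>Product on QSym (x) QSym: (a (x) b)(c (x) d) = ac (x) bd, bilinearly.\<close>
definition tmult :: "('b::comm_monoid_add bcomp \<times> 'b bcomp \<Rightarrow>\<^sub>0 'k::comm_semiring_1)
    \<Rightarrow> ('b bcomp \<times> 'b bcomp \<Rightarrow>\<^sub>0 'k) \<Rightarrow> ('b bcomp \<times> 'b bcomp \<Rightarrow>\<^sub>0 'k)" where
  "tmult x y = (\<Sum>p\<in>Poly_Mapping.keys x. \<Sum>q\<in>Poly_Mapping.keys y.
      let u = qmult (Poly_Mapping.single (fst p) 1) (Poly_Mapping.single (fst q) 1);
          v = qmult (Poly_Mapping.single (snd p) 1) (Poly_Mapping.single (snd q) 1)
      in \<Sum>g\<in>Poly_Mapping.keys u. \<Sum>d\<in>Poly_Mapping.keys v.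
           Poly_Mapping.single (g, d) (Poly_Mapping.lookup x p * Poly_Mapping.lookup y q * Poly_Mapping.lookup u g * Poly_Mapping.lookup v d))"

definition comul_left :: "('b::zero bcomp \<times> 'b bcomp \<Rightarrow>\<^sub>0 'k::comm_semiring_1)
    \<Rightarrow> ('b bcomp \<times> 'b bcomp \<times> 'b bcomp \<Rightarrow>\<^sub>0 'k)" where
  "comul_left x = (\<Sum>p\<in>Poly_Mapping.keys x. let u = qcomul (Poly_Mapping.single (fst p) (1::'k)) in
      \<Sum>q\<in>Poly_Mapping.keys u. Poly_Mapping.single (fst q, snd q, snd p) (Poly_Mapping.lookup x p * Poly_Mapping.lookup u q))"

definition comul_right :: "('b::zero bcomp \<times> 'b bcomp \<Rightarrow>\<^sub>0 'k::comm_semiring_1)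
    \<Rightarrow> ('b bcomp \<times> 'b bcomp \<times> 'b bcomp \<Rightarrow>\<^sub>0 'k)" where
  "comul_right x = (\<Sum>p\<in>Poly_Mapping.keys x. let u = qcomul (Poly_Mapping.single (snd p) (1::'k)) in
      \<Sum>q\<in>Poly_Mapping.keys u. Poly_Mapping.single (fst p, fst q, snd q) (Poly_Mapping.lookup x p * Poly_Mapping.lookup u q))"

text \<open>(epsilon (x) id) and (id (x) epsilon) : QSym^(x2) -> QSym (k (x) QSym = QSym).\<close>
definition counit_left :: "('b::zero bcomp \<times> 'b bcomp \<Rightarrow>\<^sub>0 'k::comm_semiring_1) \<Rightarrow> ('b bcomp \<Rightarrow>\<^sub>0 'k)" where
  "counit_left x = (\<Sum>p\<in>Poly_Mapping.keys x.
      Poly_Mapping.single (snd p) (qcounit (Poly_Mapping.single (fst p) (1::'k)) * Poly_Mapping.lookup x p))"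

definition counit_right :: "('b::zero bcomp \<times> 'b bcomp \<Rightarrow>\<^sub>0 'k::comm_semiring_1) \<Rightarrow> ('b bcomp \<Rightarrow>\<^sub>0 'k)" where
  "counit_right x = (\<Sum>p\<in>Poly_Mapping.keys x.
      Poly_Mapping.single (fst p) (Poly_Mapping.lookup x p * qcounit (Poly_Mapping.single (snd p) (1::'k))))"

definition conv_left :: "(('b::comm_monoid_add bcomp \<Rightarrow>\<^sub>0 'k::comm_semiring_1) \<Rightarrow> ('b bcomp \<Rightarrow>\<^sub>0 'k))
    \<Rightarrow> ('b bcomp \<times> 'b bcomp \<Rightarrow>\<^sub>0 'k) \<Rightarrow> ('b bcomp \<Rightarrow>\<^sub>0 'k)" where
  "conv_left S x = (\<Sum>p\<in>Poly_Mapping.keys x. qsmult (Poly_Mapping.lookup x p)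
      (qmult (S (Poly_Mapping.single (fst p) 1)) (Poly_Mapping.single (snd p) 1)))"

definition conv_right :: "(('b::comm_monoid_add bcomp \<Rightarrow>\<^sub>0 'k::comm_semiring_1) \<Rightarrow> ('b bcomp \<Rightarrow>\<^sub>0 'k))
    \<Rightarrow> ('b bcomp \<times> 'b bcomp \<Rightarrow>\<^sub>0 'k) \<Rightarrow> ('b bcomp \<Rightarrow>\<^sub>0 'k)" where
  "conv_right S x = (\<Sum>p\<in>Poly_Mapping.keys x. qsmult (Poly_Mapping.lookup x p)
      (qmult (Poly_Mapping.single (fst p) 1) (S (Poly_Mapping.single (snd p) 1))))"

end

theory Submission
  imports Defs "HOL-Library.FuncSet"
begin

text \<open>
  For a monomial \<open>x\<^sup>f\<close> let \<open>flat f\<close> be its list of nonzero exponents, read in increasing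
  order of the variables. As \<open>B - {0}\<close> is closed under addition, a monomial
  \<open>x_i\<^sub>1^\<alpha>\<^sub>1 \<cdots> x_i\<^sub>k^\<alpha>\<^sub>k\<close> with \<open>i\<^sub>1 < \<dots> < i\<^sub>k\<close> has flattening exactly \<open>\<alpha>\<close>, so \<open>M\<^sub>\<alpha>\<close> is the
  indicator function of \<open>{f. flat f = \<alpha>}\<close> and the coefficient of \<open>M\<^sub>\<alpha>\<close> in a
  quasisymmetric series is its coefficient at any monomial of flattening \<open>\<alpha>\<close>; in particular
  the \<open>M\<^sub>\<alpha>\<close> are linearly independent. An order-preserving relabelling of the variables
  preserves flattenings and permutes the factorisations of a monomial (finitely many, as \<open>B\<close>
  is additively finite), so products of quasisymmetric series are quasisymmetric. The
  coefficient of \<open>M\<^sub>\<alpha> \<otimes> M\<^sub>\<beta>\<close> in \<open>\<Delta> c\<close> is that of \<open>M\<^sub>\<alpha>\<^sub>\<beta>\<close> in \<open>c\<close>, which gives the coalgebra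
  axioms at once; compatibility with the product follows by putting \<open>\<alpha>\<close> into low and \<open>\<beta>\<close>
  into high variables.

  For the antipode, \<open>M\<^sub>\<alpha>\<close> counts the strictly increasing index sequences \<open>ks\<close> with
  \<open>\<Sum>\<^sub>j x_(ks!j)^\<alpha>\<^sub>j = x\<^sup>h\<close>. Run-length encoding shows that \<open>\<Sum>\<^sub>J M_(J\<circ>\<alpha>\<^sup>r)\<close> counts the weakly
  decreasing ones, and multiplying such counting series concatenates the sequences. Hence
  \<open>\<Sum>\<^sub>i S(M_(\<alpha>\<^sub>1..\<alpha>\<^sub>i)) M_(\<alpha>\<^sub>i\<^sub>+\<^sub>1..\<alpha>\<^sub>k)\<close> counts, with sign \<open>(-1)\<^sup>i\<close>, the index sequences
  together with a split point \<open>i\<close> before which the sequence decreases weakly and after which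
  it increases strictly. For a nonempty sequence the admissible split points are either none
  or two adjacent ones, and their signs cancel.
\<close>

abbreviation lookup :: "('a \<Rightarrow>\<^sub>0 'b::zero) \<Rightarrow> 'a \<Rightarrow> 'b" where "lookup \<equiv> Poly_Mapping.lookup"
abbreviation keys :: "('a \<Rightarrow>\<^sub>0 'b::zero) \<Rightarrow> 'a set" where "keys \<equiv> Poly_Mapping.keys"

fun monom :: "nat list \<Rightarrow> 'b::monoid_add list \<Rightarrow> (nat \<Rightarrow>\<^sub>0 'b)" where
  "monom (i # ix) (x # xs) = Poly_Mapping.single i x + monom ix xs"
| "monom _ _ = 0"

lemma monom_Nil2 [simp]: "monom ix [] = 0"
  by (cases ix) auto

lemma monom_eq_sum:
  "length ix = length xs \<Longrightarrow>
    monom ix xs = (\<Sum>j<length ix. Poly_Mapping.single (ix ! j) (xs ! j))"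
proof (induction ix arbitrary: xs)
  case (Cons i ix)
  then obtain x xs' where "xs = x # xs'" by (cases xs) auto
  with Cons show ?case
    by (simp add: sum.lessThan_Suc_shift del: sum.lessThan_Suc)
qed simp

lemma monom_append:
  "monom (ix @ js) xs = monom ix (take (length ix) xs) + monom js (drop (length ix) xs)"
proof (induction ix arbitrary: xs)
  case (Cons i ix)
  then show ?case by (cases xs) (auto simp: add.assoc)
qed simp

lemma monom_append_append:
  "length ix = length xs \<Longrightarrow> monom (ix @ js) (xs @ ys) = monom ix xs + monom js ys"
  by (simp add: monom_append)

lemma monom_rev:
  "length ix = length xs \<Longrightarrow> monom (rev ix) (rev xs) = monom ix (xs::'b::comm_monoid_add list)"
  by (induction ix xs rule: list_induct2) (simp_all add: monom_append_append add.commute)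

lemma monom_replicate:
  "monom (replicate j i) xs = Poly_Mapping.single i (sum_list (take j xs))"
proof (induction j arbitrary: xs)
  case (Suc j)
  then show ?case by (cases xs) (auto simp: single_add)
qed simp

lemma keys_monom_subset: "keys (monom ix xs) \<subseteq> set ix"
proof (induction ix arbitrary: xs)
  case (Cons i ix)
  then show ?case
    by (cases xs) (auto dest!: subsetD[OF keys_add] split: if_splits)
qed simp

lemma lookup_monom_notin: "q \<notin> set ix \<Longrightarrow> lookup (monom ix xs) q = 0"
  using keys_monom_subset[of ix xs] by (auto simp: in_keys_iff)

lemma lookup_monom_nth:
  "distinct ix \<Longrightarrow> length xs = length ix \<Longrightarrow> j < length ix \<Longrightarrow>
    lookup (monom ix xs) (ix ! j) = xs ! j"
proof (induction ix arbitrary: xs j)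
  case (Cons i ix)
  then obtain x xs' where xs: "xs = x # xs'" by (cases xs) auto
  show ?case
  proof (cases j)
    case 0
    with Cons xs show ?thesis by (simp add: lookup_add lookup_monom_notin)
  next
    case (Suc j')
    with Cons xs have "ix ! j' \<noteq> i" using nth_mem by fastforce
    with Cons xs Suc show ?thesis by (simp add: lookup_add lookup_single)
  qed
qed simp

lemma lookup_monom_map:
  "distinct ix \<Longrightarrow> lookup (monom ix (map g ix)) q = (if q \<in> set ix then g q else 0)"
  by (induction ix) (auto simp: lookup_add lookup_single lookup_monom_notin when_def)

lemma monom_map_lookup:
  "distinct ix \<Longrightarrow> keys h \<subseteq> set ix \<Longrightarrow> monom ix (map (lookup h) ix) = h"
  by (rule poly_mapping_eqI) (auto simp: lookup_monom_map in_keys_iff)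

lemma nonzero_Rep_bcomp: "0 \<notin> set (Rep_bcomp a)"
  using Rep_bcomp[of a] by simp

lemma Rep_bcomp_Abs_bcomp: "0 \<notin> set xs \<Longrightarrow> Rep_bcomp (Abs_bcomp xs) = xs"
  by (simp add: Abs_bcomp_inverse)

lemma Rep_bcomp_Nil: "Rep_bcomp (Abs_bcomp [] :: 'b::zero bcomp) = []"
  by (rule Rep_bcomp_Abs_bcomp) simp

lemma Rep_bcomp_eq_Nil_iff: "Rep_bcomp a = [] \<longleftrightarrow> a = Abs_bcomp []"
  by (metis Rep_bcomp_inverse Rep_bcomp_Nil)

definition bc_append :: "'b::zero bcomp \<Rightarrow> 'b bcomp \<Rightarrow> 'b bcomp" where
  "bc_append x y = Abs_bcomp (Rep_bcomp x @ Rep_bcomp y)"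

lemma Rep_bc_append: "Rep_bcomp (bc_append x y) = Rep_bcomp x @ Rep_bcomp y"
  unfolding bc_append_def by (rule Rep_bcomp_Abs_bcomp) (simp add: nonzero_Rep_bcomp)

lemma Rep_bc_take: "Rep_bcomp (bc_take i a) = take i (Rep_bcomp a)"
  unfolding bc_take_def by (rule Rep_bcomp_Abs_bcomp) (meson nonzero_Rep_bcomp in_set_takeD)

lemma Rep_bc_drop: "Rep_bcomp (bc_drop i a) = drop i (Rep_bcomp a)"
  unfolding bc_drop_def by (rule Rep_bcomp_Abs_bcomp) (meson nonzero_Rep_bcomp in_set_dropD)

lemma bc_append_assoc: "bc_append (bc_append u v) w = bc_append u (bc_append v w)"
  by (simp add: Rep_bcomp_inject[symmetric] Rep_bc_append)

lemma bc_append_Nil_left [simp]: "bc_append (Abs_bcomp []) w = w"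
  by (simp add: Rep_bcomp_inject[symmetric] Rep_bc_append Rep_bcomp_Nil)

lemma bc_append_Nil_right [simp]: "bc_append w (Abs_bcomp []) = w"
  by (simp add: Rep_bcomp_inject[symmetric] Rep_bc_append Rep_bcomp_Nil)

lemma bc_append_eq_Nil_iff:
  "bc_append x y = Abs_bcomp [] \<longleftrightarrow> x = Abs_bcomp [] \<and> y = Abs_bcomp []"
  by (simp add: Rep_bcomp_inject[symmetric] Rep_bc_append Rep_bcomp_Nil)

lemma bc_take_drop_eq_iff:
  assumes "i \<le> length (Rep_bcomp a)"
  shows "(bc_take i a = x \<and> bc_drop i a = y) \<longleftrightarrow> (i = length (Rep_bcomp x) \<and> a = bc_append x y)"
proof
  assume "bc_take i a = x \<and> bc_drop i a = y"
  then have "Rep_bcomp x = take i (Rep_bcomp a)" "Rep_bcomp y = drop i (Rep_bcomp a)"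
    by (auto simp: Rep_bc_take Rep_bc_drop)
  then show "i = length (Rep_bcomp x) \<and> a = bc_append x y"
    using assms by (simp add: Rep_bcomp_inject[symmetric] Rep_bc_append)
qed (simp add: Rep_bcomp_inject[symmetric] Rep_bc_append Rep_bc_take Rep_bc_drop)

lemma bc_append_take_drop:
  "i \<le> length (Rep_bcomp a) \<Longrightarrow> bc_append (bc_take i a) (bc_drop i a) = a"
  using bc_take_drop_eq_iff[of i a "bc_take i a" "bc_drop i a"] by simp

section \<open>Flattening a monomial\<close>

definition flat :: "(nat \<Rightarrow>\<^sub>0 'b::zero) \<Rightarrow> 'b list" where
  "flat h = map (lookup h) (sorted_list_of_set (keys h))"

lemma flat_single_add:
  assumes "\<forall>q\<in>keys R. p < q"
  shows "flat (Poly_Mapping.single p v + R) = (if v = 0 then [] else [v]) @ flat R"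
proof (cases "v = 0")
  case False
  have pR: "lookup R p = 0" using assms by (auto simp: in_keys_iff)
  have keys_eq: "keys (Poly_Mapping.single p v + R) = insert p (keys R)"
    using False pR by (auto simp: in_keys_iff lookup_add lookup_single when_def split: if_splits)
  have "sorted_list_of_set (insert p (keys R)) = p # sorted_list_of_set (keys R)"
  proof -
    have "Min (insert p (keys R)) = p" using assms
      by (simp add: Min_insert2 less_imp_le)
    moreover have "insert p (keys R) - {p} = keys R" using assms by auto
    ultimately show ?thesis
      using sorted_list_of_set_nonempty[of "insert p (keys R)"] by simp
  qed
  moreover have "map (lookup (Poly_Mapping.single p v + R)) (sorted_list_of_set (keys R))
      = map (lookup R) (sorted_list_of_set (keys R))"
    using assms by (auto simp: lookup_add lookup_single)
  ultimately show ?thesis using False pR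
    by (simp add: flat_def keys_eq lookup_add)
qed simp

lemma flat_monom:
  "sorted_wrt (<) ix \<Longrightarrow> length xs = length ix \<Longrightarrow> flat (monom ix xs) = filter (\<lambda>x. x \<noteq> 0) xs"
proof (induction ix arbitrary: xs)
  case Nil then show ?case by (simp add: flat_def)
next
  case (Cons i ix)
  then obtain x xs' where xs: "xs = x # xs'" by (cases xs) auto
  have "\<forall>q\<in>keys (monom ix xs'). i < q" using Cons keys_monom_subset[of ix xs'] by auto
  with Cons xs show ?case by (simp add: flat_single_add)
qed

lemma flat_eq_filter_map:
  "sorted_wrt (<) ix \<Longrightarrow> keys (f::nat \<Rightarrow>\<^sub>0 'b::monoid_add) \<subseteq> set ix \<Longrightarrow>
    flat f = filter (\<lambda>x. x \<noteq> 0) (map (lookup f) ix)"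
  using flat_monom[of ix "map (lookup f) ix"] monom_map_lookup[of ix f]
  by (simp add: strict_sorted_iff)

lemma nonzero_flat: "x \<in> set (flat h) \<Longrightarrow> x \<noteq> 0"
  by (auto simp: flat_def in_keys_iff)

lemma length_flat: "length (flat h) = card (keys h)"
  by (simp add: flat_def)

lemma flat_eq_Nil_iff: "flat h = [] \<longleftrightarrow> h = 0"
  by (simp add: flat_def)

lemma monom_flat: "monom (sorted_list_of_set (keys h)) (flat h) = h"
  unfolding flat_def by (rule monom_map_lookup) auto

lemma filter_nonzero_id: "0 \<notin> set xs \<Longrightarrow> filter (\<lambda>x. x \<noteq> 0) xs = xs"
  by (induction xs) auto

lemma length_flat_add_le: "length (flat (f + g)) \<le> length (flat f) + length (flat (g::nat \<Rightarrow>\<^sub>0 'b::monoid_add))"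
proof -
  have "card (keys (f + g)) \<le> card (keys f \<union> keys g)"
    by (intro card_mono) (auto dest: subsetD[OF keys_add])
  also have "\<dots> \<le> card (keys f) + card (keys g)" by (rule card_Un_le)
  finally show ?thesis by (simp add: length_flat)
qed

lemma lookup_in_flat: "lookup f q \<in> insert 0 (set (flat f))"
  by (cases "q \<in> keys f") (auto simp: flat_def in_keys_iff)

lemma set_flat_add:
  "set (flat (f + g)) \<subseteq> (\<lambda>(u, v). u + v) ` (insert 0 (set (flat f)) \<times> insert 0 (set (flat (g::nat \<Rightarrow>\<^sub>0 'b::monoid_add))))"
proof
  fix x assume "x \<in> set (flat (f + g))"
  then obtain q where "x = lookup f q + lookup g q" by (auto simp: flat_def lookup_add)
  then show "x \<in> (\<lambda>(u, v). u + v) ` (insert 0 (set (flat f)) \<times> insert 0 (set (flat g)))"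
    using lookup_in_flat[of f q] lookup_in_flat[of g q] by force
qed

definition flat_comp :: "(nat \<Rightarrow>\<^sub>0 'b::zero) \<Rightarrow> 'b bcomp" where
  "flat_comp h = Abs_bcomp (flat h)"

lemma Rep_flat_comp: "Rep_bcomp (flat_comp h) = flat h"
  unfolding flat_comp_def by (rule Rep_bcomp_Abs_bcomp) (auto dest: nonzero_flat)

lemma flat_comp_eq_Nil_iff: "flat_comp h = Abs_bcomp [] \<longleftrightarrow> h = 0"
  by (simp add: Rep_bcomp_inject[symmetric] Rep_flat_comp Rep_bcomp_Nil flat_eq_Nil_iff)

lemma flat_comp_zero: "flat_comp 0 = Abs_bcomp []"
  by (simp add: flat_comp_eq_Nil_iff)

definition std_monom :: "'b::monoid_add bcomp \<Rightarrow> (nat \<Rightarrow>\<^sub>0 'b)" where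
  "std_monom a = monom [0..<length (Rep_bcomp a)] (Rep_bcomp a)"

lemma flat_std_monom: "flat (std_monom a) = Rep_bcomp a"
  unfolding std_monom_def by (subst flat_monom) (auto simp: filter_nonzero_id nonzero_Rep_bcomp)

lemma flat_comp_std_monom [simp]: "flat_comp (std_monom a) = a"
  by (simp add: Rep_bcomp_inject[symmetric] Rep_flat_comp flat_std_monom)

section \<open>Order-preserving relabelling of variables\<close>

definition pack :: "nat list \<Rightarrow> (nat \<Rightarrow>\<^sub>0 'b::monoid_add) \<Rightarrow> (nat \<Rightarrow>\<^sub>0 'b)" where
  "pack ix f = monom [0..<length ix] (map (lookup f) ix)"

definition unpack :: "nat list \<Rightarrow> (nat \<Rightarrow>\<^sub>0 'b::monoid_add) \<Rightarrow> (nat \<Rightarrow>\<^sub>0 'b)" where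
  "unpack ix g = monom ix (map (lookup g) [0..<length ix])"

lemma lookup_pack: "lookup (pack ix f) j = (if j < length ix then lookup f (ix ! j) else 0)"
proof (cases "j < length ix")
  case True
  then have "lookup (pack ix f) ([0..<length ix] ! j) = map (lookup f) ix ! j"
    unfolding pack_def by (intro lookup_monom_nth) auto
  with True show ?thesis by simp
qed (simp add: pack_def lookup_monom_notin)

lemma lookup_unpack_nth:
  "distinct ix \<Longrightarrow> j < length ix \<Longrightarrow> lookup (unpack ix g) (ix ! j) = lookup g j"
  unfolding unpack_def by (subst lookup_monom_nth) auto

lemma lookup_unpack_notin: "q \<notin> set ix \<Longrightarrow> lookup (unpack ix g) q = 0"
  unfolding unpack_def by (simp add: lookup_monom_notin)

lemma pack_add: "pack ix (f + g) = pack ix f + pack ix g"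
  by (rule poly_mapping_eqI) (simp add: lookup_pack lookup_add)

lemma unpack_add: "distinct ix \<Longrightarrow> unpack ix (f + g) = unpack ix f + unpack ix g"
proof (rule poly_mapping_eqI)
  fix q assume "distinct ix"
  then show "lookup (unpack ix (f + g)) q = lookup (unpack ix f + unpack ix g) q"
    by (cases "q \<in> set ix")
      (auto simp: in_set_conv_nth lookup_unpack_nth lookup_unpack_notin lookup_add)
qed

lemma unpack_pack: "distinct ix \<Longrightarrow> keys f \<subseteq> set ix \<Longrightarrow> unpack ix (pack ix f) = f"
proof (rule poly_mapping_eqI)
  fix q assume "distinct ix" and "keys f \<subseteq> set ix"
  then show "lookup (unpack ix (pack ix f)) q = lookup f q"
  proof (cases "q \<in> set ix")
    case True
    then obtain j where "j < length ix" "q = ix ! j" by (auto simp: in_set_conv_nth)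
    with \<open>distinct ix\<close> show ?thesis by (simp add: lookup_unpack_nth lookup_pack)
  qed (use \<open>keys f \<subseteq> set ix\<close> in \<open>auto simp: lookup_unpack_notin in_keys_iff\<close>)
qed

lemma pack_unpack: "distinct ix \<Longrightarrow> keys g \<subseteq> {..<length ix} \<Longrightarrow> pack ix (unpack ix g) = g"
  by (rule poly_mapping_eqI) (auto simp: lookup_pack lookup_unpack_nth in_keys_iff)

lemma keys_pack: "keys (pack ix f) \<subseteq> {..<length ix}"
  using keys_monom_subset unfolding pack_def by fastforce

lemma flat_unpack:
  "sorted_wrt (<) ix \<Longrightarrow> keys g \<subseteq> {..<length ix} \<Longrightarrow> flat (unpack ix g) = flat g"
  unfolding unpack_def
  by (subst flat_monom) (auto simp: flat_eq_filter_map[of "[0..<length ix]"] atLeast0LessThan)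

lemma pack_sorted_keys: "pack (sorted_list_of_set (keys h)) h = std_monom (flat_comp h)"
  by (simp add: pack_def std_monom_def Rep_flat_comp flat_def)

section \<open>Splitting the variables into a low and a high block\<close>

definition shift :: "nat \<Rightarrow> (nat \<Rightarrow>\<^sub>0 'b::zero) \<Rightarrow> (nat \<Rightarrow>\<^sub>0 'b)" where
  "shift N g = Abs_poly_mapping (\<lambda>q. if N \<le> q then lookup g (q - N) else 0)"

definition low :: "nat \<Rightarrow> (nat \<Rightarrow>\<^sub>0 'b::zero) \<Rightarrow> (nat \<Rightarrow>\<^sub>0 'b)" where
  "low N u = Abs_poly_mapping (\<lambda>q. if q < N then lookup u q else 0)"

definition high :: "nat \<Rightarrow> (nat \<Rightarrow>\<^sub>0 'b::zero) \<Rightarrow> (nat \<Rightarrow>\<^sub>0 'b)" where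
  "high N u = Abs_poly_mapping (\<lambda>q. lookup u (q + N))"

lemma lookup_shift: "lookup (shift N g) q = (if N \<le> q then lookup g (q - N) else 0)"
proof -
  have "{q. (if N \<le> q then lookup g (q - N) else 0) \<noteq> 0} \<subseteq> (\<lambda>q. q + N) ` keys g"
  proof
    fix x assume "x \<in> {q. (if N \<le> q then lookup g (q - N) else 0) \<noteq> 0}"
    then show "x \<in> (\<lambda>q. q + N) ` keys g"
      by (intro image_eqI[of _ _ "x - N"]) (auto simp: in_keys_iff split: if_splits)
  qed
  then have "finite {q. (if N \<le> q then lookup g (q - N) else 0) \<noteq> 0}"
    by (rule finite_subset) auto
  then show ?thesis by (simp add: shift_def)
qed

lemma lookup_low: "lookup (low N u) q = (if q < N then lookup u q else 0)"
proof -
  have "{q. (if q < N then lookup u q else 0) \<noteq> 0} \<subseteq> keys u"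
    by (auto simp: in_keys_iff split: if_splits)
  then show ?thesis
    unfolding low_def by (subst Abs_poly_mapping_inverse) (auto intro: finite_subset)
qed

lemma lookup_high: "lookup (high N u) q = lookup u (q + N)"
proof -
  have "{q. lookup u (q + N) \<noteq> 0} \<subseteq> (\<lambda>q. q - N) ` keys u"
  proof
    fix x assume "x \<in> {q. lookup u (q + N) \<noteq> 0}"
    then show "x \<in> (\<lambda>q. q - N) ` keys u" by (intro image_eqI[of _ _ "x + N"]) (auto simp: in_keys_iff)
  qed
  then show ?thesis
    unfolding high_def by (subst Abs_poly_mapping_inverse) (auto intro: finite_subset)
qed

lemma shift_add: "shift N (a + b) = shift N a + shift N (b::nat \<Rightarrow>\<^sub>0 'b::monoid_add)"
  by (rule poly_mapping_eqI) (simp add: lookup_shift lookup_add)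

lemma low_add: "low N (a + b) = low N a + low N (b::nat \<Rightarrow>\<^sub>0 'b::monoid_add)"
  by (rule poly_mapping_eqI) (simp add: lookup_low lookup_add)

lemma high_add: "high N (a + b) = high N a + high N (b::nat \<Rightarrow>\<^sub>0 'b::monoid_add)"
  by (rule poly_mapping_eqI) (simp add: lookup_high lookup_add)

lemma low_add_shift: "keys f \<subseteq> {..<N} \<Longrightarrow> low N (f + shift N g) = (f::nat \<Rightarrow>\<^sub>0 'b::monoid_add)"
  by (rule poly_mapping_eqI) (auto simp: lookup_low lookup_add lookup_shift in_keys_iff)

lemma lookup_outside_keys: "keys f \<subseteq> {..<N} \<Longrightarrow> lookup f (q + N :: nat) = 0"
  by (auto simp: in_keys_iff)

lemma high_add_shift: "keys f \<subseteq> {..<N} \<Longrightarrow> high N (f + shift N g) = (g::nat \<Rightarrow>\<^sub>0 'b::monoid_add)"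
  by (rule poly_mapping_eqI) (simp add: lookup_high lookup_add lookup_shift lookup_outside_keys)

lemma low_add_shift_high: "low N u + shift N (high N u) = (u::nat \<Rightarrow>\<^sub>0 'b::monoid_add)"
  by (rule poly_mapping_eqI) (simp add: lookup_low lookup_add lookup_shift lookup_high)

lemma keys_shift: "keys (shift N g) \<subseteq> (\<lambda>q. q + N) ` keys g"
proof
  fix x assume "x \<in> keys (shift N g)"
  then show "x \<in> (\<lambda>q. q + N) ` keys g"
    by (intro image_eqI[of _ _ "x - N"]) (auto simp: in_keys_iff lookup_shift split: if_splits)
qed

lemma flat_add_shift:
  assumes kf: "keys f \<subseteq> {..<N}"
  shows "flat (f + shift N g) = flat f @ flat (g::nat \<Rightarrow>\<^sub>0 'b::monoid_add)"
proof -
  define ps where "ps = sorted_list_of_set (keys f)"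
  define qs where "qs = sorted_list_of_set (keys g)"
  have ps: "sorted_wrt (<) ps" "set ps = keys f" by (auto simp: ps_def)
  have qs: "sorted_wrt (<) qs" "set qs = keys g" by (auto simp: qs_def)
  have sorted: "sorted_wrt (<) (ps @ map (\<lambda>q. q + N) qs)"
    using ps qs kf by (auto simp: sorted_wrt_append sorted_wrt_map)
  have keys: "keys (f + shift N g) \<subseteq> set (ps @ map (\<lambda>q. q + N) qs)"
    using keys_add[of f "shift N g"] keys_shift[of N g] ps qs by auto
  have "flat (f + shift N g) = filter (\<lambda>x. x \<noteq> 0) (map (lookup (f + shift N g)) (ps @ map (\<lambda>q. q + N) qs))"
    by (rule flat_eq_filter_map[OF sorted keys])
  also have "map (lookup (f + shift N g)) (ps @ map (\<lambda>q. q + N) qs) = map (lookup f) ps @ map (lookup g) qs"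
    using ps kf by (auto simp: lookup_add lookup_shift lookup_outside_keys)
  finally show ?thesis
    using flat_eq_filter_map[OF ps(1), of f] flat_eq_filter_map[OF qs(1), of g] ps(2) qs(2) by simp
qed

lemma sum_keys_delta: "(\<Sum>p\<in>keys x. if p = t then lookup x p * r else 0) = lookup x t * (r::'k::semiring_0)"
  by (simp add: in_keys_iff)

lemma sum_keys_delta': "(\<Sum>p\<in>keys x. if p = t then lookup x p else 0) = lookup x t"
  by (simp add: in_keys_iff)

lemma lookup_qsmult: "lookup (qsmult r c) x = r * lookup c x"
proof -
  have "lookup (qsmult r c) x = (\<Sum>a\<in>keys c. if a = x then r * lookup c a else 0)"
    unfolding qsmult_def lookup_sum by (rule sum.cong) (auto simp: lookup_single)
  then show ?thesis by (simp add: in_keys_iff)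
qed

lemma sum_keys_single:
  "(\<And>a. F a 0 = 0) \<Longrightarrow> (\<Sum>a\<in>keys (Poly_Mapping.single b r). F a (lookup (Poly_Mapping.single b r) a)) = F b r"
  by (cases "r = 0") auto

lemma sum_swap4:
  "(\<Sum>p\<in>P. \<Sum>q\<in>Q. \<Sum>r\<in>R. \<Sum>s\<in>S. F p q r s) = (\<Sum>r\<in>R. \<Sum>s\<in>S. \<Sum>p\<in>P. \<Sum>q\<in>Q. F p q r s)"
proof -
  have "(\<Sum>p\<in>P. \<Sum>q\<in>Q. \<Sum>r\<in>R. \<Sum>s\<in>S. F p q r s) = (\<Sum>p\<in>P. \<Sum>r\<in>R. \<Sum>q\<in>Q. \<Sum>s\<in>S. F p q r s)"
    by (rule sum.cong[OF refl], rule sum.swap)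
  also have "\<dots> = (\<Sum>r\<in>R. \<Sum>p\<in>P. \<Sum>q\<in>Q. \<Sum>s\<in>S. F p q r s)" by (rule sum.swap)
  also have "\<dots> = (\<Sum>r\<in>R. \<Sum>p\<in>P. \<Sum>s\<in>S. \<Sum>q\<in>Q. F p q r s)"
    by (rule sum.cong[OF refl], rule sum.cong[OF refl], rule sum.swap)
  also have "\<dots> = (\<Sum>r\<in>R. \<Sum>s\<in>S. \<Sum>p\<in>P. \<Sum>q\<in>Q. F p q r s)"
    by (rule sum.cong[OF refl], rule sum.swap)
  finally show ?thesis .
qed

lemma mult_sum_mult_sum:
  "c * (\<Sum>r\<in>R. A r) * (\<Sum>s\<in>S. B s) = (\<Sum>r\<in>R. \<Sum>s\<in>S. c * A r * B s :: 'k::comm_semiring_1)"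
proof -
  have "c * (\<Sum>r\<in>R. A r) * (\<Sum>s\<in>S. B s) = c * (\<Sum>r\<in>R. \<Sum>s\<in>S. A r * B s)"
    by (simp only: mult.assoc sum_product)
  also have "\<dots> = (\<Sum>r\<in>R. \<Sum>s\<in>S. c * A r * B s)" by (simp add: sum_distrib_left mult.assoc)
  finally show ?thesis .
qed

section \<open>The coalgebra structure\<close>

lemma lookup_qcomul: "lookup (qcomul c) (x, y) = lookup c (bc_append x y)"
proof -
  have "(\<Sum>i\<in>{0..length (Rep_bcomp a)}.
      lookup (Poly_Mapping.single (bc_take i a, bc_drop i a) (lookup c a)) (x, y))
      = (if a = bc_append x y then lookup c a else 0)" for a
  proof -
    have "(\<Sum>i\<in>{0..length (Rep_bcomp a)}.
        lookup (Poly_Mapping.single (bc_take i a, bc_drop i a) (lookup c a)) (x, y))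
      = (\<Sum>i\<in>{0..length (Rep_bcomp a)}.
          if i = length (Rep_bcomp x) then (if a = bc_append x y then lookup c a else 0) else 0)"
      by (rule sum.cong) (auto simp: lookup_single when_def bc_take_drop_eq_iff)
    also have "\<dots> = (if a = bc_append x y then lookup c a else 0)"
      by (auto simp: Rep_bc_append)
    finally show ?thesis .
  qed
  then have "lookup (qcomul c) (x, y) = (\<Sum>a\<in>keys c. if a = bc_append x y then lookup c a else 0)"
    unfolding qcomul_def lookup_sum by simp
  then show ?thesis by (simp only: sum_keys_delta')
qed

lemma lookup_qcomul_single:
  "lookup (qcomul (Poly_Mapping.single a (1::'k::comm_semiring_1))) (u, v) = (if a = bc_append u v then 1 else 0)"
  by (simp add: lookup_qcomul lookup_single when_def)

lemma qcounit_single: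
  "qcounit (Poly_Mapping.single a (1::'k::comm_semiring_1)) = (if a = Abs_bcomp [] then 1 else 0)"
  by (simp add: qcounit_def lookup_single when_def)

lemma lookup_comul_left:
  "lookup (comul_left x) (u, v, w) = lookup (x::_ \<Rightarrow>\<^sub>0 'k::comm_semiring_1) (bc_append u v, w)"
proof -
  have "lookup (comul_left x) (u, v, w) = (\<Sum>p\<in>keys x. if p = (bc_append u v, w) then lookup x p else 0)"
    unfolding comul_left_def Let_def lookup_sum
  proof (rule sum.cong[OF refl])
    fix p assume "p \<in> keys x"
    let ?U = "qcomul (Poly_Mapping.single (fst p) (1::'k))"
    have "(\<Sum>q\<in>keys ?U. lookup (Poly_Mapping.single (fst q, snd q, snd p) (lookup x p * lookup ?U q)) (u, v, w))
        = (\<Sum>q\<in>keys ?U. if q = (u, v) then lookup ?U q * (if snd p = w then lookup x p else 0) else 0)"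
      by (rule sum.cong) (auto simp: lookup_single when_def mult.commute)
    also have "\<dots> = lookup ?U (u, v) * (if snd p = w then lookup x p else 0)"
      by (rule sum_keys_delta)
    also have "\<dots> = (if p = (bc_append u v, w) then lookup x p else 0)"
      by (cases p) (auto simp: lookup_qcomul_single)
    finally show "(\<Sum>q\<in>keys ?U. lookup (Poly_Mapping.single (fst q, snd q, snd p) (lookup x p * lookup ?U q)) (u, v, w))
        = (if p = (bc_append u v, w) then lookup x p else 0)" .
  qed
  then show ?thesis by (simp only: sum_keys_delta')
qed

lemma lookup_comul_right:
  "lookup (comul_right x) (u, v, w) = lookup (x::_ \<Rightarrow>\<^sub>0 'k::comm_semiring_1) (u, bc_append v w)"
proof -
  have "lookup (comul_right x) (u, v, w) = (\<Sum>p\<in>keys x. if p = (u, bc_append v w) then lookup x p else 0)"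
    unfolding comul_right_def Let_def lookup_sum
  proof (rule sum.cong[OF refl])
    fix p assume "p \<in> keys x"
    let ?U = "qcomul (Poly_Mapping.single (snd p) (1::'k))"
    have "(\<Sum>q\<in>keys ?U. lookup (Poly_Mapping.single (fst p, fst q, snd q) (lookup x p * lookup ?U q)) (u, v, w))
        = (\<Sum>q\<in>keys ?U. if q = (v, w) then lookup ?U q * (if fst p = u then lookup x p else 0) else 0)"
      by (rule sum.cong) (auto simp: lookup_single when_def mult.commute)
    also have "\<dots> = lookup ?U (v, w) * (if fst p = u then lookup x p else 0)"
      by (rule sum_keys_delta)
    also have "\<dots> = (if p = (u, bc_append v w) then lookup x p else 0)"
      by (cases p) (auto simp: lookup_qcomul_single)
    finally show "(\<Sum>q\<in>keys ?U. lookup (Poly_Mapping.single (fst p, fst q, snd q) (lookup x p * lookup ?U q)) (u, v, w))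
        = (if p = (u, bc_append v w) then lookup x p else 0)" .
  qed
  then show ?thesis by (simp only: sum_keys_delta')
qed

lemma lookup_counit_left:
  "lookup (counit_left x) w = lookup (x::_ \<Rightarrow>\<^sub>0 'k::comm_semiring_1) (Abs_bcomp [], w)"
proof -
  have "lookup (counit_left x) w = (\<Sum>p\<in>keys x. if p = (Abs_bcomp [], w) then lookup x p else 0)"
    unfolding counit_left_def lookup_sum
    by (rule sum.cong[OF refl]) (auto simp: lookup_single when_def qcounit_single)
  then show ?thesis by (simp only: sum_keys_delta')
qed

lemma lookup_counit_right:
  "lookup (counit_right x) w = lookup (x::_ \<Rightarrow>\<^sub>0 'k::comm_semiring_1) (w, Abs_bcomp [])"
proof -
  have "lookup (counit_right x) w = (\<Sum>p\<in>keys x. if p = (w, Abs_bcomp []) then lookup x p else 0)"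
    unfolding counit_right_def lookup_sum
    by (rule sum.cong[OF refl]) (auto simp: lookup_single when_def qcounit_single)
  then show ?thesis by (simp only: sum_keys_delta')
qed

lemma comul_left_qcomul: "comul_left (qcomul c) = comul_right (qcomul (c::_ \<Rightarrow>\<^sub>0 'k::comm_semiring_1))"
  by (rule poly_mapping_eqI)
    (auto simp: lookup_comul_left lookup_comul_right lookup_qcomul bc_append_assoc)

lemma counit_left_qcomul: "counit_left (qcomul c) = (c::_ \<Rightarrow>\<^sub>0 'k::comm_semiring_1)"
  by (rule poly_mapping_eqI) (simp add: lookup_counit_left lookup_qcomul)

lemma counit_right_qcomul: "counit_right (qcomul c) = (c::_ \<Rightarrow>\<^sub>0 'k::comm_semiring_1)"
  by (rule poly_mapping_eqI) (simp add: lookup_counit_right lookup_qcomul)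

lemma qcomul_qunit: "qcomul (qunit :: 'b::zero bcomp \<Rightarrow>\<^sub>0 'k::comm_semiring_1) = tunit"
  by (rule poly_mapping_eqI)
    (auto simp: lookup_qcomul qunit_def tunit_def lookup_single when_def bc_append_eq_Nil_iff
      eq_commute[of "Abs_bcomp []"] split: if_splits)

lemma qcounit_qunit: "qcounit (qunit :: 'b::zero bcomp \<Rightarrow>\<^sub>0 'k::comm_semiring_1) = 1"
  by (simp add: qcounit_def qunit_def)

lemma sum_qcomul:
  "(\<Sum>p\<in>keys (qcomul c). lookup (qcomul c) p * T p)
     = (\<Sum>a\<in>keys c. lookup (c::'b::zero bcomp \<Rightarrow>\<^sub>0 'k::comm_semiring_1) a *
          (\<Sum>i\<in>{0..length (Rep_bcomp a)}. T (bc_take i a, bc_drop i a)))"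
proof -
  define I where "I = Sigma (keys c) (\<lambda>a. {0..length (Rep_bcomp a)})"
  define \<phi> where "\<phi> = (\<lambda>(a, i). (bc_take i a, bc_drop i (a::'b bcomp)))"
  have "inj_on \<phi> I"
  proof (rule inj_onI, clarsimp simp: I_def \<phi>_def)
    fix a i a' i'
    assume "i \<le> length (Rep_bcomp a)" "i' \<le> length (Rep_bcomp a')"
      and "bc_take i a = bc_take i' a'" "bc_drop i a = bc_drop i' a'"
    then show "a = a' \<and> i = i'" by (metis bc_take_drop_eq_iff)
  qed
  have "keys (qcomul c) \<subseteq> \<phi> ` I"
  proof (clarify)
    fix x y assume "(x, y) \<in> keys (qcomul c)"
    then have "(bc_append x y, length (Rep_bcomp x)) \<in> I"
      by (simp add: I_def in_keys_iff lookup_qcomul Rep_bc_append)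
    moreover have "\<phi> (bc_append x y, length (Rep_bcomp x)) = (x, y)"
      using bc_take_drop_eq_iff[of "length (Rep_bcomp x)" "bc_append x y" x y]
      by (simp add: \<phi>_def Rep_bc_append)
    ultimately show "(x, y) \<in> \<phi> ` I" by (metis image_eqI)
  qed
  then have "(\<Sum>p\<in>keys (qcomul c). lookup (qcomul c) p * T p)
      = (\<Sum>p\<in>\<phi> ` I. lookup (qcomul c) p * T p)"
    by (intro sum.mono_neutral_left) (auto simp: I_def in_keys_iff)
  also have "\<dots> = (\<Sum>u\<in>I. lookup (qcomul c) (\<phi> u) * T (\<phi> u))"
    using \<open>inj_on \<phi> I\<close> by (simp add: sum.reindex)
  also have "\<dots> = (\<Sum>a\<in>keys c. \<Sum>i\<in>{0..length (Rep_bcomp a)}. lookup c a * T (bc_take i a, bc_drop i a))"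
    unfolding I_def by (subst sum.Sigma)
      (auto intro!: sum.cong simp: \<phi>_def lookup_qcomul bc_append_take_drop split_def)
  finally show ?thesis by (simp add: sum_distrib_left)
qed

lemma lookup_tmult:
  "lookup (tmult x y) (\<gamma>, \<delta>) = (\<Sum>p\<in>keys x. \<Sum>q\<in>keys y. lookup x p * lookup y q *
    lookup (qmult (Poly_Mapping.single (fst p) 1) (Poly_Mapping.single (fst q) 1)) \<gamma> *
    lookup (qmult (Poly_Mapping.single (snd p) 1) (Poly_Mapping.single (snd q) (1::'k::comm_semiring_1))) \<delta>)"
proof -
  have "(\<Sum>g\<in>keys u. \<Sum>d\<in>keys v. lookup (Poly_Mapping.single (g, d) (C * lookup u g * lookup v d)) (\<gamma>, \<delta>))
      = C * lookup u \<gamma> * lookup (v::_ \<Rightarrow>\<^sub>0 'k) \<delta>" for C u v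
  proof -
    have "(\<Sum>g\<in>keys u. \<Sum>d\<in>keys v. lookup (Poly_Mapping.single (g, d) (C * lookup u g * lookup v d)) (\<gamma>, \<delta>))
        = (\<Sum>g\<in>keys u. \<Sum>d\<in>keys v. if g = \<gamma> then (if d = \<delta> then lookup v d * (C * lookup u g) else 0) else 0)"
      by (intro sum.cong refl) (auto simp: lookup_single when_def ac_simps)
    also have "\<dots> = (\<Sum>g\<in>keys u. if g = \<gamma> then lookup u g * (C * lookup v \<delta>) else 0)"
      by (intro sum.cong refl) (simp add: sum_keys_delta ac_simps)
    finally show ?thesis by (simp add: sum_keys_delta ac_simps)
  qed
  then show ?thesis unfolding tmult_def Let_def lookup_sum by simp
qed

section \<open>Factorisations and index sequences\<close>

definition decomps :: "(nat \<Rightarrow>\<^sub>0 'b::comm_monoid_add) \<Rightarrow> ((nat \<Rightarrow>\<^sub>0 'b) \<times> (nat \<Rightarrow>\<^sub>0 'b)) set" where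
  "decomps h = {(f, g). f + g = h}"

lemma pmult_eq_sum_decomps: "pmult F G h = (\<Sum>p\<in>decomps h. F (fst p) * G (snd p))"
  by (simp add: pmult_def decomps_def)

lemma pmult_scale_left: "pmult (\<lambda>h. c * F h) G h = c * pmult F G (h::nat \<Rightarrow>\<^sub>0 'b::comm_monoid_add)"
  by (simp add: pmult_eq_sum_decomps sum_distrib_left mult.assoc)

lemma pmult_scale_right: "pmult F (\<lambda>h. c * G h) h = c * pmult F G (h::nat \<Rightarrow>\<^sub>0 'b::comm_monoid_add)"
  by (simp add: pmult_eq_sum_decomps sum_distrib_left ac_simps)

definition index_seqs :: "(nat list \<Rightarrow> bool) \<Rightarrow> 'b::monoid_add list \<Rightarrow> (nat \<Rightarrow>\<^sub>0 'b) \<Rightarrow> nat list set" where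
  "index_seqs P xs h = {ix. length ix = length xs \<and> P ix \<and> monom ix xs = h}"

lemma Mser_eq_card_index_seqs:
  "Mser a h = of_nat (card (index_seqs (sorted_wrt (<)) (Rep_bcomp a) h))"
proof -
  have "{ix. length ix = length (Rep_bcomp a) \<and> sorted_wrt (<) ix \<and>
      h = (\<Sum>j<length ix. Poly_Mapping.single (ix ! j) (Rep_bcomp a ! j))}
      = index_seqs (sorted_wrt (<)) (Rep_bcomp a) h"
    by (auto simp: index_seqs_def monom_eq_sum)
  then show ?thesis by (simp add: Mser_def)
qed

lemma index_seqs_filter: "index_seqs P xs h = {ks \<in> index_seqs (\<lambda>_. True) xs h. P ks}"
  by (auto simp: index_seqs_def)

lemma of_nat_card_filter:
  "finite E \<Longrightarrow> c * of_nat (card {x\<in>E. P x}) = (\<Sum>x\<in>E. if P x then c else (0::'k::comm_semiring_1))"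
  by (simp add: sum.inter_filter[symmetric] mult.commute)

fun expand :: "nat list \<Rightarrow> nat list \<Rightarrow> nat list" where
  "expand (j # J) (p # ps) = replicate j p @ expand J ps"
| "expand _ _ = []"

fun rle :: "nat list \<Rightarrow> nat list \<times> nat list" where
  "rle [] = ([], [])"
| "rle (k # ks) = (case rle ks of (J, ps) \<Rightarrow>
      if ps \<noteq> [] \<and> hd ps = k then (Suc (hd J) # tl J, ps) else (1 # J, k # ps))"

lemma rle_props:
  "sorted ks \<Longrightarrow> rle ks = (J, ps) \<Longrightarrow> length J = length ps \<and> (\<forall>j\<in>set J. 0 < j) \<and>
     sorted_wrt (<) ps \<and> set ps = set ks \<and> sum_list J = length ks \<and> expand J ps = ks"
proof (induction ks arbitrary: J ps)
  case (Cons k ks)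
  obtain J' ps' where r: "rle ks = (J', ps')" by (cases "rle ks")
  have kle: "\<forall>x\<in>set ks. k \<le> x" using Cons.prems by auto
  have IH: "length J' = length ps' \<and> (\<forall>j\<in>set J'. 0 < j) \<and> sorted_wrt (<) ps' \<and> set ps' = set ks
      \<and> sum_list J' = length ks \<and> expand J' ps' = ks" using Cons r by auto
  show ?case
  proof (cases "ps' \<noteq> [] \<and> hd ps' = k")
    case True
    then obtain ps'' where ps': "ps' = k # ps''" by (cases ps') auto
    then obtain j J'' where J': "J' = j # J''" using IH by (cases J') auto
    have "J = Suc j # J''" "ps = ps'" using Cons.prems(2) r True J' by auto
    then show ?thesis using IH J' ps' by auto
  next
    case False
    have e: "J = 1 # J'" "ps = k # ps'" using Cons.prems(2) r False by auto
    have "k \<notin> set ps'"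
    proof
      assume "k \<in> set ps'"
      then obtain q qs where q: "ps' = q # qs" by (cases ps') auto
      with IH kle have "k \<le> q" by auto
      moreover have "k = q \<or> q < k" using IH q \<open>k \<in> set ps'\<close> by auto
      ultimately have "q = k" by auto
      with False q show False by simp
    qed
    then have "\<forall>x\<in>set ps'. k < x" using kle IH by (auto simp: order_le_less)
    then show ?thesis using IH e by auto
  qed
qed auto

lemma rle_replicate_append:
  "rle R = (J, ps) \<Longrightarrow> (ps = [] \<or> hd ps \<noteq> p) \<Longrightarrow>
    rle (replicate (Suc m) p @ R) = (Suc m # J, p # ps)"
  by (induction m) auto

lemma rle_expand:
  "length J = length ps \<Longrightarrow> (\<forall>j\<in>set J. 0 < j) \<Longrightarrow> sorted_wrt (<) ps \<Longrightarrow> rle (expand J ps) = (J, ps)"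
proof (induction J ps rule: list_induct2)
  case (Cons j J p ps)
  then obtain m where m: "j = Suc m" by (cases j) auto
  have "ps = [] \<or> hd ps \<noteq> p" using Cons.prems by (cases ps) auto
  with Cons have "rle (replicate (Suc m) p @ expand J ps) = (Suc m # J, p # ps)"
    by (intro rle_replicate_append) auto
  then show ?case using m by (simp only: expand.simps)
qed simp

lemma set_expand: "set (expand J ps) \<subseteq> set ps"
  by (induction J ps rule: expand.induct) auto

lemma sorted_expand: "sorted ps \<Longrightarrow> sorted (expand J ps)"
  by (induction J ps rule: expand.induct) (use set_expand in \<open>fastforce simp: sorted_append\<close>)+

lemma length_expand: "length J = length ps \<Longrightarrow> length (expand J ps) = sum_list J"
  by (induction J ps rule: list_induct2) auto

lemma monom_expand: "monom (expand J ps) xs = monom ps (jcomp J xs)"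
  by (induction J ps arbitrary: xs rule: expand.induct) (auto simp: monom_append monom_replicate)

lemma length_jcomp: "length (jcomp J xs) = length J"
  by (induction J arbitrary: xs) auto

lemma finite_nat_compositions: "finite (nat_compositions n)"
proof -
  have "length J \<le> sum_list J" if "\<forall>j\<in>set J. 0 < j" for J :: "nat list"
    using that by (induction J) auto
  then have "nat_compositions n \<subseteq> {J. set J \<subseteq> {..n} \<and> length J \<le> n}"
    unfolding nat_compositions_def using member_le_sum_list by fastforce
  then show ?thesis by (rule finite_subset) (rule finite_lists_length_le, simp)
qed

text \<open>Grouping equal indices: a weakly increasing index sequence for \<open>xs\<close> is the same as a
  composition \<open>J\<close> of \<open>length xs\<close> together with a strictly increasing one for \<open>J \<circ> xs\<close>.\<close>
lemma card_index_seqs_sorted: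
  "card (Sigma (nat_compositions (length xs)) (\<lambda>J. index_seqs (sorted_wrt (<)) (jcomp J xs) h))
    = card (index_seqs sorted xs h)"
proof (rule bij_betw_same_card[of "\<lambda>x. expand (fst x) (snd x)"], rule bij_betw_byWitness[where f' = rle])
  show "\<forall>x\<in>Sigma (nat_compositions (length xs)) (\<lambda>J. index_seqs (sorted_wrt (<)) (jcomp J xs) h).
      rle (expand (fst x) (snd x)) = x"
    by (auto simp: index_seqs_def nat_compositions_def length_jcomp rle_expand)
  show "\<forall>ks\<in>index_seqs sorted xs h. expand (fst (rle ks)) (snd (rle ks)) = ks"
    using rle_props by (auto simp: index_seqs_def split: prod.splits)
  show "(\<lambda>x. expand (fst x) (snd x)) `
      Sigma (nat_compositions (length xs)) (\<lambda>J. index_seqs (sorted_wrt (<)) (jcomp J xs) h)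
      \<subseteq> index_seqs sorted xs h"
    by (auto simp: index_seqs_def nat_compositions_def length_jcomp length_expand monom_expand
        sorted_expand strict_sorted_imp_sorted)
  show "rle ` index_seqs sorted xs h
      \<subseteq> Sigma (nat_compositions (length xs)) (\<lambda>J. index_seqs (sorted_wrt (<)) (jcomp J xs) h)"
  proof
    fix x assume "x \<in> rle ` index_seqs sorted xs h"
    then obtain ks where ks: "ks \<in> index_seqs sorted xs h" and x: "x = rle ks" by auto
    obtain J ps where r: "rle ks = (J, ps)" by (cases "rle ks")
    have "length ks = length xs" "sorted ks" "monom ks xs = h"
      using ks by (auto simp: index_seqs_def)
    with rle_props[OF _ r] x r show "x \<in>
        Sigma (nat_compositions (length xs)) (\<lambda>J. index_seqs (sorted_wrt (<)) (jcomp J xs) h)"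
      by (auto simp: index_seqs_def nat_compositions_def length_jcomp monom_expand[symmetric])
  qed
qed

lemma card_index_seqs_rev:
  "card (index_seqs sorted (rev xs) h) = card (index_seqs (sorted_wrt (\<ge>)) (xs::'b::comm_monoid_add list) h)"
proof -
  have "index_seqs sorted (rev xs) h = rev ` index_seqs (sorted_wrt (\<ge>)) xs h"
  proof (intro equalityI subsetI)
    fix ks assume "ks \<in> index_seqs sorted (rev xs) h"
    then have "rev ks \<in> index_seqs (sorted_wrt (\<ge>)) xs h"
      using monom_rev[of "rev ks" xs] by (auto simp: index_seqs_def sorted_wrt_rev)
    then show "ks \<in> rev ` index_seqs (sorted_wrt (\<ge>)) xs h" by (metis image_eqI rev_rev_ident)
  qed (auto simp: index_seqs_def sorted_wrt_rev monom_rev)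
  then show ?thesis by (simp add: card_image)
qed

section \<open>Cancelling pairs of split points\<close>

text \<open>With \<open>r a\<close> meaning that positions \<open>a\<close> and \<open>a + 1\<close> of a list of length \<open>n\<close> are related,
  \<open>i\<close> is an admissible split point if all adjacent pairs before \<open>i\<close> are related and none
  after \<open>i\<close> is; the pair straddling \<open>i\<close> is unconstrained.\<close>
definition admissible_split :: "(nat \<Rightarrow> bool) \<Rightarrow> nat \<Rightarrow> nat \<Rightarrow> bool" where
  "admissible_split r n i \<longleftrightarrow> (\<forall>a. Suc a < i \<longrightarrow> r a) \<and> (\<forall>a. i \<le> a \<and> Suc a < n \<longrightarrow> \<not> r a)"

lemma admissible_split_le_Suc:
  assumes "admissible_split r n i" "admissible_split r n j" "j \<le> n"
  shows "j \<le> Suc i"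
proof (rule ccontr)
  assume "\<not> j \<le> Suc i"
  then have "r i" and "\<not> r i" using assms by (auto simp: admissible_split_def)
  then show False by simp
qed

lemma admissible_split_pair:
  assumes adm: "admissible_split r n i" and "i \<le> n" "1 \<le> n"
  shows "\<exists>j<n. admissible_split r n j \<and> admissible_split r n (Suc j)"
proof (cases "i < n \<and> (i = 0 \<or> r (i - 1))")
  case True
  have "admissible_split r n (Suc i)"
    unfolding admissible_split_def
  proof (intro conjI allI impI)
    fix a assume "Suc a < Suc i"
    then have "Suc a < i \<or> a = i - 1 \<and> i \<noteq> 0" by auto
    with adm True show "r a" by (auto simp: admissible_split_def)
  qed (use adm in \<open>auto simp: admissible_split_def\<close>)
  with adm True show ?thesis by blast
next
  case False
  with assms have "i \<noteq> 0" "\<not> r (i - 1) \<or> i = n" by auto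
  have "admissible_split r n (i - 1)"
    unfolding admissible_split_def
  proof (intro conjI allI impI)
    fix a assume "i - 1 \<le> a \<and> Suc a < n"
    then have "a = i - 1 \<or> i \<le> a" by auto
    with adm \<open>\<not> r (i - 1) \<or> i = n\<close> \<open>i - 1 \<le> a \<and> Suc a < n\<close> show "\<not> r a"
      by (auto simp: admissible_split_def)
  qed (use adm in \<open>auto simp: admissible_split_def\<close>)
  with adm \<open>i \<noteq> 0\<close> \<open>i \<le> n\<close> show ?thesis by (intro exI[of _ "i - 1"]) auto
qed

lemma sum_admissible_splits:
  fixes g :: "nat \<Rightarrow> 'k::comm_ring_1"
  assumes "1 \<le> n" and g: "\<And>j. j < n \<Longrightarrow> g j + g (Suc j) = 0"
  shows "(\<Sum>i\<in>{0..n}. if admissible_split r n i then g i else 0) = 0"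
proof -
  define S where "S = {i\<in>{0..n}. admissible_split r n i}"
  have "(\<Sum>i\<in>{0..n}. if admissible_split r n i then g i else 0) = sum g S"
    unfolding S_def by (rule sum.inter_filter[symmetric]) simp
  also have "sum g S = 0"
  proof (cases "S = {}")
    case False
    then obtain i where "admissible_split r n i" "i \<le> n" by (auto simp: S_def)
    with assms obtain j where j: "j < n" "admissible_split r n j" "admissible_split r n (Suc j)"
      using admissible_split_pair by blast
    have "S = {j, Suc j}"
      using j admissible_split_le_Suc[OF j(2)] admissible_split_le_Suc[OF _ j(3)]
      by (fastforce simp: S_def)
    then show ?thesis using g[OF j(1)] by simp
  qed simp
  finally show ?thesis .
qed

lemma all_shifted_iff:
  "i \<le> m \<Longrightarrow> (\<forall>a. Suc a < m - i \<longrightarrow> P (i + a)) \<longleftrightarrow> (\<forall>a. i \<le> a \<and> Suc a < m \<longrightarrow> P a)"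
proof safe
  fix a assume H: "\<forall>a. Suc a < m - i \<longrightarrow> P (i + a)" and "i \<le> a" "Suc a < m"
  then show "P a" using H[rule_format, of "a - i"] by simp
qed auto

lemma sum_sorted_splits:
  fixes g :: "nat \<Rightarrow> 'k::comm_ring_1"
  assumes R: "transp R" and Q: "transp Q" and compl: "\<And>x y. Q x y \<longleftrightarrow> \<not> R x y"
    and "ks \<noteq> []" and g: "\<And>j. j < length ks \<Longrightarrow> g j + g (Suc j) = 0"
  shows "(\<Sum>i\<in>{0..length ks}. if sorted_wrt R (take i ks) \<and> sorted_wrt Q (drop i ks) then g i else 0) = 0"
proof -
  have "sorted_wrt R (take i ks) \<and> sorted_wrt Q (drop i ks)
      \<longleftrightarrow> admissible_split (\<lambda>a. R (ks ! a) (ks ! Suc a)) (length ks) i" if "i \<le> length ks" for i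
    using that all_shifted_iff[OF that, of "\<lambda>a. Q (ks ! a) (ks ! Suc a)"]
    by (simp add: admissible_split_def sorted_wrt_iff_nth_Suc_transp[OF R]
        sorted_wrt_iff_nth_Suc_transp[OF Q] compl min_def)
  then have "(\<Sum>i\<in>{0..length ks}. if sorted_wrt R (take i ks) \<and> sorted_wrt Q (drop i ks) then g i else 0)
      = (\<Sum>i\<in>{0..length ks}. if admissible_split (\<lambda>a. R (ks ! a) (ks ! Suc a)) (length ks) i then g i else 0)"
    by (intro sum.cong) auto
  also have "\<dots> = 0"
    using assms by (intro sum_admissible_splits) (auto simp: Suc_le_eq)
  finally show ?thesis .
qed

lemma sum_splits_index_seqs:
  fixes g :: "nat \<Rightarrow> 'k::comm_ring_1"
  assumes "transp R" "transp Q" "\<And>x y. Q x y \<longleftrightarrow> \<not> R x y"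
    and g: "\<And>j. j < length xs \<Longrightarrow> g j + g (Suc j) = 0" and g0: "xs = [] \<Longrightarrow> g 0 = 1"
  shows "(\<Sum>i\<in>{0..length xs}. \<Sum>ks\<in>index_seqs (\<lambda>_. True) xs h.
        if sorted_wrt R (take i ks) \<and> sorted_wrt Q (drop i ks) then g i else 0)
      = (if xs = [] \<and> h = 0 then 1 else 0)"
proof (cases "xs = []")
  case True
  then have "index_seqs (\<lambda>_. True) xs h = (if h = 0 then {[]} else {})"
    by (auto simp: index_seqs_def)
  with True g0 show ?thesis by (simp split: if_splits)
next
  case False
  have "(\<Sum>ks\<in>index_seqs (\<lambda>_. True) xs h. \<Sum>i\<in>{0..length xs}.
      if sorted_wrt R (take i ks) \<and> sorted_wrt Q (drop i ks) then g i else 0) = 0"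
  proof (rule sum.neutral, intro ballI)
    fix ks assume "ks \<in> index_seqs (\<lambda>_. True) xs h"
    then have "length ks = length xs" by (simp add: index_seqs_def)
    with False assms show "(\<Sum>i\<in>{0..length xs}.
        if sorted_wrt R (take i ks) \<and> sorted_wrt Q (drop i ks) then g i else 0) = 0"
      using sum_sorted_splits[of R Q ks g] by fastforce
  qed
  with False show ?thesis by (subst sum.swap) simp
qed

section \<open>Quasisymmetric series\<close>

locale exponent_monoid =
  assumes nonzero_add: "\<And>b c::'b::comm_monoid_add. b \<noteq> 0 \<Longrightarrow> c \<noteq> 0 \<Longrightarrow> b + c \<noteq> 0"
    and finite_add_pairs: "\<And>a::'b. finite {(b, c). b + c = a}"
begin

lemma add_eq_0_iff: "(b::'b) + c = 0 \<longleftrightarrow> b = 0 \<and> c = 0"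
  by (cases "b = 0"; cases "c = 0") (auto dest: nonzero_add)

lemma sum_list_nonzero: "xs \<noteq> [] \<Longrightarrow> 0 \<notin> set xs \<Longrightarrow> sum_list (xs::'b list) \<noteq> 0"
  by (induction xs) (auto simp: add_eq_0_iff)

lemma keys_monom: "length ix = length xs \<Longrightarrow> 0 \<notin> set xs \<Longrightarrow> keys (monom ix (xs::'b list)) = set ix"
proof (induction ix arbitrary: xs)
  case (Cons i ix)
  then obtain x xs' where xs: "xs = x # xs'" by (cases xs) auto
  with Cons have "keys (monom ix xs') = set ix" and "x \<noteq> 0" by auto
  with xs show ?case
    by (auto simp: in_keys_iff lookup_add lookup_single when_def add_eq_0_iff split: if_splits)
qed simp

lemma keys_summand:
  assumes "f + g = h" shows "keys (f::nat \<Rightarrow>\<^sub>0 'b) \<subseteq> keys h" "keys (g::nat \<Rightarrow>\<^sub>0 'b) \<subseteq> keys h"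
  using assms by (auto simp: in_keys_iff lookup_add add_eq_0_iff)

lemma finite_decomps: "finite (decomps (h::nat \<Rightarrow>\<^sub>0 'b))"
proof -
  define \<phi> where "\<phi> = (\<lambda>(p::(nat \<Rightarrow>\<^sub>0 'b) \<times> (nat \<Rightarrow>\<^sub>0 'b)).
      restrict (\<lambda>q. (lookup (fst p) q, lookup (snd p) q)) (keys h))"
  have "\<phi> ` decomps h \<subseteq> PiE (keys h) (\<lambda>q. {(b, c). b + c = lookup h q})"
    by (auto simp: \<phi>_def decomps_def lookup_add restrict_PiE_iff)
  moreover have "finite (PiE (keys h) (\<lambda>q. {(b, c). b + c = lookup h q}))"
    by (intro finite_PiE) (auto intro: finite_add_pairs)
  ultimately have "finite (\<phi> ` decomps h)" by (rule finite_subset)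
  moreover have "inj_on \<phi> (decomps h)"
  proof (rule inj_onI)
    fix p p' assume "p \<in> decomps h" "p' \<in> decomps h" and e: "\<phi> p = \<phi> p'"
    then obtain f g f' g' where p: "p = (f, g)" "p' = (f', g')" and d: "f + g = h" "f' + g' = h"
      by (auto simp: decomps_def)
    have "lookup f q = lookup f' q \<and> lookup g q = lookup g' q" for q
    proof (cases "q \<in> keys h")
      case True
      then show ?thesis using fun_cong[OF e, of q] p by (simp add: \<phi>_def)
    next
      case False
      then have "q \<notin> keys f" "q \<notin> keys g" "q \<notin> keys f'" "q \<notin> keys g'"
        using keys_summand[OF d(1)] keys_summand[OF d(2)] by auto
      then show ?thesis by (simp add: in_keys_iff)
    qed
    then show "p = p'" using p by (auto intro: poly_mapping_eqI)
  qed
  ultimately show ?thesis by (rule finite_imageD)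
qed

lemma decomps_zero: "decomps (0::nat \<Rightarrow>\<^sub>0 'b) = {(0, 0)}"
proof (intro equalityI subsetI)
  fix p assume "p \<in> decomps (0::nat \<Rightarrow>\<^sub>0 'b)"
  then obtain f g where "p = (f, g)" "f + g = 0" by (auto simp: decomps_def)
  with keys_summand[of f g 0] show "p \<in> {(0, 0)}" by simp
qed (simp add: decomps_def)

lemma pmult_assoc: "pmult (pmult F G) H = pmult F (pmult G H :: (nat \<Rightarrow>\<^sub>0 'b) \<Rightarrow> 'k::comm_semiring_1)"
proof
  fix h :: "nat \<Rightarrow>\<^sub>0 'b"
  have "pmult (pmult F G) H h = (\<Sum>p\<in>decomps h. \<Sum>q\<in>decomps (fst p). F (fst q) * G (snd q) * H (snd p))"
    by (simp add: pmult_eq_sum_decomps sum_distrib_right)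
  also have "\<dots> = (\<Sum>x\<in>Sigma (decomps h) (\<lambda>p. decomps (fst p)). F (fst (snd x)) * G (snd (snd x)) * H (snd (fst x)))"
    by (subst sum.Sigma) (auto simp: finite_decomps split_def)
  also have "\<dots> = (\<Sum>x\<in>Sigma (decomps h) (\<lambda>p. decomps (snd p)). F (fst (fst x)) * (G (fst (snd x)) * H (snd (snd x))))"
    by (rule sum.reindex_bij_witness[where j = "\<lambda>((u, w), (f, g)). ((f, g + w), (g, w))"
        and i = "\<lambda>((f, v), (g, w)). ((f + g, w), (f, g))"]) (auto simp: decomps_def add.assoc mult.assoc)
  also have "\<dots> = (\<Sum>p\<in>decomps h. \<Sum>q\<in>decomps (snd p). F (fst p) * (G (fst q) * H (snd q)))"
    by (subst sum.Sigma) (auto simp: finite_decomps split_def)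
  also have "\<dots> = pmult F (pmult G H) h"
    by (simp add: pmult_eq_sum_decomps sum_distrib_left)
  finally show "pmult (pmult F G) H h = pmult F (pmult G H) h" .
qed

lemma pmult_pone_left: "pmult pone F = (F :: (nat \<Rightarrow>\<^sub>0 'b) \<Rightarrow> 'k::comm_semiring_1)"
proof
  fix h
  have "pmult pone F h = (\<Sum>p\<in>decomps h. if p = (0, h) then F h else 0)"
    unfolding pmult_eq_sum_decomps by (rule sum.cong) (auto simp: pone_def decomps_def)
  also have "\<dots> = F h"
    by (simp add: sum.delta[OF finite_decomps]) (simp add: decomps_def)
  finally show "pmult pone F h = F h" .
qed

lemma pmult_pone_right: "pmult F pone = (F :: (nat \<Rightarrow>\<^sub>0 'b) \<Rightarrow> 'k::comm_semiring_1)"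
proof
  fix h
  have "pmult F pone h = (\<Sum>p\<in>decomps h. if p = (h, 0) then F h else 0)"
    unfolding pmult_eq_sum_decomps by (rule sum.cong) (auto simp: pone_def decomps_def)
  also have "\<dots> = F h"
    by (simp add: sum.delta[OF finite_decomps]) (simp add: decomps_def)
  finally show "pmult F pone h = F h" .
qed

lemma index_seqs_strict:
  "index_seqs (sorted_wrt (<)) (Rep_bcomp (a::'b bcomp)) f = (if flat_comp f = a then {sorted_list_of_set (keys f)} else {})"
proof (intro equalityI subsetI)
  fix ix assume "ix \<in> index_seqs (sorted_wrt (<)) (Rep_bcomp a) f"
  then have ix: "length ix = length (Rep_bcomp a)" "sorted_wrt (<) ix" "f = monom ix (Rep_bcomp a)"
    by (auto simp: index_seqs_def)
  then have "keys f = set ix" using keys_monom[OF ix(1) nonzero_Rep_bcomp] by simp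
  moreover have "flat f = Rep_bcomp a"
    using ix flat_monom[of ix "Rep_bcomp a"] by (simp add: filter_nonzero_id nonzero_Rep_bcomp)
  ultimately show "ix \<in> (if flat_comp f = a then {sorted_list_of_set (keys f)} else {})"
    using ix by (auto simp: flat_comp_def Rep_bcomp_inverse sorted_list_of_set.idem_if_sorted_distinct
        strict_sorted_iff)
next
  fix ix assume "ix \<in> (if flat_comp f = a then {sorted_list_of_set (keys f)} else {})"
  then have "Rep_bcomp a = flat f" "ix = sorted_list_of_set (keys f)"
    using Rep_flat_comp[of f] by (auto split: if_splits)
  then show "ix \<in> index_seqs (sorted_wrt (<)) (Rep_bcomp a) f"
    by (simp add: index_seqs_def monom_flat length_flat)
qed

lemma Mser_eq_indicator: "Mser (a::'b bcomp) f = (if flat_comp f = a then 1 else 0)"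
  by (simp add: Mser_eq_card_index_seqs index_seqs_strict)

lemma ser_eq_lookup: "ser (c::'b bcomp \<Rightarrow>\<^sub>0 'k::comm_semiring_1) h = lookup c (flat_comp h)"
proof -
  have "ser c h = (\<Sum>a\<in>keys c. if a = flat_comp h then lookup c a else 0)"
    unfolding ser_def Mser_eq_indicator by (rule sum.cong) auto
  then show ?thesis by (simp only: sum_keys_delta')
qed

lemma inj_ser: "inj (ser :: ('b bcomp \<Rightarrow>\<^sub>0 'k::comm_semiring_1) \<Rightarrow> _)"
proof (rule injI)
  fix c d :: "'b bcomp \<Rightarrow>\<^sub>0 'k"
  assume "ser c = ser d"
  then have "ser c (std_monom a) = ser d (std_monom a)" for a by simp
  then show "c = d" by (intro poly_mapping_eqI) (simp add: ser_eq_lookup)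
qed

lemma ser_add: "ser (c + d) h = ser c h + ser (d::'b bcomp \<Rightarrow>\<^sub>0 'k::comm_semiring_1) h"
  by (simp add: ser_eq_lookup lookup_add)

lemma ser_qsmult: "ser (qsmult r c) = (\<lambda>h. r * ser (c::'b bcomp \<Rightarrow>\<^sub>0 'k::comm_semiring_1) h)"
  by (simp add: fun_eq_iff ser_eq_lookup lookup_qsmult)

lemma ser_sum: "ser (\<Sum>i\<in>I. c i) h = (\<Sum>i\<in>I. ser (c i :: 'b bcomp \<Rightarrow>\<^sub>0 'k::comm_semiring_1) h)"
  by (simp add: ser_eq_lookup lookup_sum)

lemma ser_single: "ser (Poly_Mapping.single a r) h = r * Mser (a::'b bcomp) h"
  by (simp add: ser_eq_lookup Mser_eq_indicator lookup_single when_def)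

lemma ser_qunit: "ser (qunit :: 'b bcomp \<Rightarrow>\<^sub>0 'k::comm_semiring_1) = pone"
  by (auto simp: ser_eq_lookup qunit_def pone_def lookup_single when_def flat_comp_eq_Nil_iff
      eq_commute[of "Abs_bcomp []"])

lemma sum_decomps_pack:
  assumes "sorted_wrt (<) ix" "set ix = keys (h::nat \<Rightarrow>\<^sub>0 'b)"
  shows "(\<Sum>p\<in>decomps h. F p) = (\<Sum>p\<in>decomps (pack ix h). F (unpack ix (fst p), unpack ix (snd p)))"
proof (rule sum.reindex_bij_witness[where j = "\<lambda>(f, g). (pack ix f, pack ix g)"
      and i = "\<lambda>(f, g). (unpack ix f, unpack ix g)"])
  have d: "distinct ix" using assms(1) by (simp add: strict_sorted_iff)
  fix p assume "p \<in> decomps h"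
  then obtain f g where p: "p = (f, g)" "f + g = h" by (auto simp: decomps_def)
  have "unpack ix (pack ix f) = f" "unpack ix (pack ix g) = g"
    using keys_summand[OF p(2)] assms d by (simp_all add: unpack_pack)
  then show "(case case p of (f, g) \<Rightarrow> (pack ix f, pack ix g) of (f, g) \<Rightarrow> (unpack ix f, unpack ix g)) = p"
    and "F (unpack ix (fst (case p of (f, g) \<Rightarrow> (pack ix f, pack ix g))),
        unpack ix (snd (case p of (f, g) \<Rightarrow> (pack ix f, pack ix g)))) = F p"
    using p by simp_all
  show "(case p of (f, g) \<Rightarrow> (pack ix f, pack ix g)) \<in> decomps (pack ix h)"
    using p by (simp add: decomps_def pack_add[symmetric])
next
  have d: "distinct ix" using assms(1) by (simp add: strict_sorted_iff)
  fix p assume "p \<in> decomps (pack ix h)"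
  then obtain f g where p: "p = (f, g)" "f + g = pack ix h" by (auto simp: decomps_def)
  then have "keys f \<subseteq> {..<length ix}" "keys g \<subseteq> {..<length ix}"
    using keys_summand[OF p(2)] keys_pack[of ix h] by auto
  then show "(case case p of (f, g) \<Rightarrow> (unpack ix f, unpack ix g) of (f, g) \<Rightarrow> (pack ix f, pack ix g)) = p"
    using p d by (simp add: pack_unpack)
  have "unpack ix f + unpack ix g = h"
    using p d assms by (simp add: unpack_add[symmetric] unpack_pack)
  then show "(case p of (f, g) \<Rightarrow> (unpack ix f, unpack ix g)) \<in> decomps h"
    using p by (simp add: decomps_def)
qed

text \<open>The product of quasisymmetric series is again quasisymmetric.\<close>
lemma pmult_ser_std_monom:
  "pmult (ser (a::'b bcomp \<Rightarrow>\<^sub>0 'k::comm_semiring_1)) (ser b) h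
    = pmult (ser a) (ser b) (std_monom (flat_comp h))"
proof -
  define ix where "ix = sorted_list_of_set (keys h)"
  have ix: "sorted_wrt (<) ix" "set ix = keys h" by (auto simp: ix_def)
  have "pmult (ser a) (ser b) h
      = (\<Sum>p\<in>decomps (pack ix h). ser a (unpack ix (fst p)) * ser b (unpack ix (snd p)))"
    unfolding pmult_eq_sum_decomps by (subst sum_decomps_pack[OF ix]) simp
  also have "\<dots> = (\<Sum>p\<in>decomps (pack ix h). ser a (fst p) * ser b (snd p))"
  proof (intro sum.cong refl)
    fix p assume "p \<in> decomps (pack ix h)"
    then have "keys (fst p) \<subseteq> keys (pack ix h)" "keys (snd p) \<subseteq> keys (pack ix h)"
      using keys_summand[of "fst p" "snd p" "pack ix h"] by (auto simp: decomps_def)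
    then have "keys (fst p) \<subseteq> {..<length ix}" "keys (snd p) \<subseteq> {..<length ix}"
      using keys_pack[of ix h] by blast+
    then show "ser a (unpack ix (fst p)) * ser b (unpack ix (snd p)) = ser a (fst p) * ser b (snd p)"
      using ix by (simp add: ser_eq_lookup flat_comp_def flat_unpack)
  qed
  also have "\<dots> = pmult (ser a) (ser b) (std_monom (flat_comp h))"
    by (simp add: pmult_eq_sum_decomps ix_def pack_sorted_keys)
  finally show ?thesis .
qed

lemma finite_support_pmult_ser:
  "finite {\<gamma>. pmult (ser (a::'b bcomp \<Rightarrow>\<^sub>0 'k::comm_semiring_1)) (ser b) (std_monom \<gamma>) \<noteq> 0}"
proof -
  define V0 where "V0 = insert 0 (\<Union>\<alpha>\<in>keys a \<union> keys b. set (Rep_bcomp (\<alpha>::'b bcomp)))"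
  define V where "V = (\<lambda>(u, v). u + v) ` (V0 \<times> V0)"
  define L where "L = (\<Sum>\<alpha>\<in>keys a. length (Rep_bcomp \<alpha>)) + (\<Sum>\<beta>\<in>keys b. length (Rep_bcomp \<beta>))"
  have "{\<gamma>. pmult (ser a) (ser b) (std_monom \<gamma>) \<noteq> 0} \<subseteq> Abs_bcomp ` {xs. set xs \<subseteq> V \<and> length xs \<le> L}"
  proof
    fix \<gamma> assume "\<gamma> \<in> {\<gamma>. pmult (ser a) (ser b) (std_monom \<gamma>) \<noteq> 0}"
    then have "(\<Sum>p\<in>decomps (std_monom \<gamma>). ser a (fst p) * ser b (snd p)) \<noteq> 0"
      by (simp add: pmult_eq_sum_decomps)
    then obtain p where "p \<in> decomps (std_monom \<gamma>)" "ser a (fst p) * ser b (snd p) \<noteq> 0"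
      using sum.not_neutral_contains_not_neutral by blast
    then obtain f g where d: "f + g = std_monom \<gamma>" and nz: "ser a f * ser b g \<noteq> 0"
      by (auto simp: decomps_def)
    from nz have a: "flat_comp f \<in> keys a" and b: "flat_comp g \<in> keys b"
      by (auto simp: ser_eq_lookup in_keys_iff)
    have \<gamma>: "Rep_bcomp \<gamma> = flat (f + g)" by (simp add: d flat_std_monom)
    have "length (Rep_bcomp (flat_comp f)) + length (Rep_bcomp (flat_comp g)) \<le> L"
      unfolding L_def using a b by (intro add_mono member_le_sum) auto
    then have "length (Rep_bcomp \<gamma>) \<le> L"
      using \<gamma> length_flat_add_le[of f g] by (simp add: Rep_flat_comp)
    moreover have "insert 0 (set (flat f)) \<subseteq> V0" "insert 0 (set (flat g)) \<subseteq> V0"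
      using a b unfolding V0_def Rep_flat_comp[symmetric] by blast+
    then have "set (Rep_bcomp \<gamma>) \<subseteq> V"
      unfolding \<gamma> V_def by (intro order_trans[OF set_flat_add] image_mono Sigma_mono)
    ultimately show "\<gamma> \<in> Abs_bcomp ` {xs. set xs \<subseteq> V \<and> length xs \<le> L}"
      by (intro image_eqI[of _ _ "Rep_bcomp \<gamma>"]) (simp_all add: Rep_bcomp_inverse)
  qed
  moreover have "finite V" unfolding V_def V0_def by (intro finite_imageI) auto
  ultimately show ?thesis
    by (rule finite_subset[OF _ finite_imageI[OF finite_lists_length_le]])
qed

lemma qsym_pmult: "\<exists>c. ser c = pmult (ser a) (ser (b::'b bcomp \<Rightarrow>\<^sub>0 'k::comm_semiring_1))"
proof -
  define c where "c = Abs_poly_mapping (\<lambda>\<gamma>. pmult (ser a) (ser b) (std_monom \<gamma>) :: 'k)"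
  have "lookup c \<gamma> = pmult (ser a) (ser b) (std_monom \<gamma>)" for \<gamma>
    unfolding c_def using finite_support_pmult_ser[of a b] by simp
  then have "ser c = pmult (ser a) (ser b)"
    by (simp add: fun_eq_iff ser_eq_lookup pmult_ser_std_monom[symmetric])
  then show ?thesis by blast
qed

lemma ser_qmult: "ser (qmult a b) = pmult (ser a) (ser (b::'b bcomp \<Rightarrow>\<^sub>0 'k::comm_semiring_1))"
proof -
  have "\<exists>!c. ser c = pmult (ser a) (ser b)"
    using qsym_pmult[of a b] inj_ser by (metis injD)
  then show ?thesis unfolding qmult_def by (rule theI')
qed

lemma qmult_assoc: "qmult (qmult a b) c = qmult a (qmult b (c::'b bcomp \<Rightarrow>\<^sub>0 'k::comm_semiring_1))"
  by (rule injD[OF inj_ser]) (simp add: ser_qmult pmult_assoc)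

lemma qmult_qunit_left: "qmult qunit a = (a::'b bcomp \<Rightarrow>\<^sub>0 'k::comm_semiring_1)"
  by (rule injD[OF inj_ser]) (simp add: ser_qmult ser_qunit pmult_pone_left)

lemma qmult_qunit_right: "qmult a qunit = (a::'b bcomp \<Rightarrow>\<^sub>0 'k::comm_semiring_1)"
  by (rule injD[OF inj_ser]) (simp add: ser_qmult ser_qunit pmult_pone_right)

lemma qmult_add_left: "qmult (a + b) c = qmult a c + qmult b (c::'b bcomp \<Rightarrow>\<^sub>0 'k::comm_semiring_1)"
  by (rule injD[OF inj_ser])
    (simp add: ser_qmult fun_eq_iff ser_add pmult_eq_sum_decomps sum.distrib distrib_right)

lemma qmult_add_right: "qmult c (a + b) = qmult c a + qmult c (b::'b bcomp \<Rightarrow>\<^sub>0 'k::comm_semiring_1)"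
  by (rule injD[OF inj_ser])
    (simp add: ser_qmult fun_eq_iff ser_add pmult_eq_sum_decomps sum.distrib distrib_left)

lemma qmult_qsmult_left: "qmult (qsmult r a) b = qsmult r (qmult a (b::'b bcomp \<Rightarrow>\<^sub>0 'k::comm_semiring_1))"
  by (rule injD[OF inj_ser]) (simp add: ser_qmult ser_qsmult fun_eq_iff pmult_scale_left)

lemma qmult_qsmult_right: "qmult a (qsmult r b) = qsmult r (qmult a (b::'b bcomp \<Rightarrow>\<^sub>0 'k::comm_semiring_1))"
  by (rule injD[OF inj_ser]) (simp add: ser_qmult ser_qsmult fun_eq_iff pmult_scale_right)

section \<open>The bialgebra axioms\<close>

lemma lookup_qmult_single_flat_comp:
  "lookup (qmult (Poly_Mapping.single \<alpha> (1::'k::comm_semiring_1)) (Poly_Mapping.single \<beta> 1)) (flat_comp f)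
    = (\<Sum>r\<in>decomps f. if flat_comp (fst r) = \<alpha> \<and> flat_comp (snd r) = (\<beta>::'b bcomp) then 1 else 0)"
proof -
  have "lookup (qmult (Poly_Mapping.single \<alpha> (1::'k)) (Poly_Mapping.single \<beta> 1)) (flat_comp f)
      = ser (qmult (Poly_Mapping.single \<alpha> (1::'k)) (Poly_Mapping.single \<beta> 1)) f"
    by (simp add: ser_eq_lookup)
  also have "\<dots> = (\<Sum>r\<in>decomps f. if flat_comp (fst r) = \<alpha> \<and> flat_comp (snd r) = \<beta> then 1 else 0)"
    unfolding ser_qmult pmult_eq_sum_decomps by (rule sum.cong) (auto simp: ser_single Mser_eq_indicator)
  finally show ?thesis .
qed

lemma lookup_tmult_flat_comp:
  "lookup (tmult x y) (flat_comp f, flat_comp g) = (\<Sum>r\<in>decomps f. \<Sum>s\<in>decomps g.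
      lookup x (flat_comp (fst r), flat_comp (fst s)) *
      lookup (y::'b bcomp \<times> 'b bcomp \<Rightarrow>\<^sub>0 'k::comm_semiring_1) (flat_comp (snd r), flat_comp (snd s)))"
proof -
  let ?ind = "\<lambda>P. if P then 1 else (0::'k)"
  have "lookup (tmult x y) (flat_comp f, flat_comp g) = (\<Sum>p\<in>keys x. \<Sum>q\<in>keys y. \<Sum>r\<in>decomps f. \<Sum>s\<in>decomps g.
      lookup x p * lookup y q * ?ind (flat_comp (fst r) = fst p \<and> flat_comp (snd r) = fst q)
        * ?ind (flat_comp (fst s) = snd p \<and> flat_comp (snd s) = snd q))"
    by (simp add: lookup_tmult lookup_qmult_single_flat_comp mult_sum_mult_sum)
  also have "\<dots> = (\<Sum>r\<in>decomps f. \<Sum>s\<in>decomps g. \<Sum>p\<in>keys x. \<Sum>q\<in>keys y.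
      (if p = (flat_comp (fst r), flat_comp (fst s)) then lookup x p else 0)
        * (if q = (flat_comp (snd r), flat_comp (snd s)) then lookup y q else 0))"
    by (subst sum_swap4) (intro sum.cong refl, auto)
  also have "\<dots> = (\<Sum>r\<in>decomps f. \<Sum>s\<in>decomps g.
      lookup x (flat_comp (fst r), flat_comp (fst s)) * lookup y (flat_comp (snd r), flat_comp (snd s)))"
    by (simp only: sum_product[symmetric] sum_keys_delta')
  finally show ?thesis .
qed

text \<open>Variables below \<open>N\<close> carry the factorisations of \<open>f\<close>, those from \<open>N\<close> on the shifted
  factorisations of \<open>g\<close>.\<close>
lemma sum_decomps_add_shift:
  assumes kf: "keys (f::nat \<Rightarrow>\<^sub>0 'b) \<subseteq> {..<N}"
  shows "(\<Sum>p\<in>decomps (f + shift N g). F p)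
    = (\<Sum>(r, s)\<in>decomps f \<times> decomps g. F (fst r + shift N (fst s), snd r + shift N (snd s)))"
proof (rule sum.reindex_bij_witness[where j = "\<lambda>(u, v). ((low N u, low N v), (high N u, high N v))"
      and i = "\<lambda>((r1, r2), (s1, s2)). (r1 + shift N s1, r2 + shift N s2)"], goal_cases)
  case (1 p)
  then show ?case by (cases p) (simp add: low_add_shift_high)
next
  case (2 p)
  then obtain u v where p: "p = (u, v)" "u + v = f + shift N g" by (auto simp: decomps_def)
  then have "low N u + low N v = f" "high N u + high N v = g"
    using kf by (simp_all add: low_add[symmetric] high_add[symmetric] low_add_shift high_add_shift)
  with p show ?case by (simp add: decomps_def)
next
  case (3 x)
  then obtain r1 r2 s1 s2 where x: "x = ((r1, r2), (s1, s2))" "r1 + r2 = f"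
    by (auto simp: decomps_def)
  then have "keys r1 \<subseteq> {..<N}" "keys r2 \<subseteq> {..<N}" using keys_summand[OF x(2)] kf by auto
  with x show ?case by (simp add: low_add_shift high_add_shift)
next
  case (4 x)
  then obtain r1 r2 s1 s2 where x: "x = ((r1, r2), (s1, s2))" "r1 + r2 = f" "s1 + s2 = g"
    by (auto simp: decomps_def)
  have "r1 + shift N s1 + (r2 + shift N s2) = (r1 + r2) + (shift N s1 + shift N s2)"
    by (simp add: add_ac)
  then have "r1 + shift N s1 + (r2 + shift N s2) = f + shift N g"
    using x by (simp add: shift_add[symmetric])
  with x show ?case by (simp add: decomps_def)
next
  case (5 p)
  then show ?case by (cases p) (simp add: low_add_shift_high)
qed

lemma qcomul_qmult: "qcomul (qmult a b) = tmult (qcomul a) (qcomul (b::'b bcomp \<Rightarrow>\<^sub>0 'k::comm_semiring_1))"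
proof (rule poly_mapping_eqI, clarify)
  fix \<gamma> \<delta> :: "'b bcomp"
  define f g where "f = std_monom \<gamma>" and "g = std_monom \<delta>"
  define N where "N = Poly_Mapping.degree f"
  have kf: "keys f \<subseteq> {..<N}" using in_keys_less_degree by (auto simp: N_def)
  have split: "flat_comp (u + shift N v) = bc_append (flat_comp u) (flat_comp v)"
    if "keys u \<subseteq> {..<N}" for u v :: "nat \<Rightarrow>\<^sub>0 'b"
    using that by (simp add: Rep_bcomp_inject[symmetric] Rep_bc_append Rep_flat_comp flat_add_shift)
  have "lookup (qcomul (qmult a b)) (flat_comp f, flat_comp g) = lookup (qmult a b) (flat_comp (f + shift N g))"
    by (simp add: lookup_qcomul split[OF kf])
  also have "\<dots> = pmult (ser a) (ser b) (f + shift N g)"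
    by (simp add: ser_eq_lookup[symmetric] ser_qmult)
  also have "\<dots> = (\<Sum>(r, s)\<in>decomps f \<times> decomps g.
      lookup a (flat_comp (fst r + shift N (fst s))) * lookup b (flat_comp (snd r + shift N (snd s))))"
    unfolding pmult_eq_sum_decomps ser_eq_lookup
    using sum_decomps_add_shift[OF kf, where F = "\<lambda>p. lookup a (flat_comp (fst p)) * lookup b (flat_comp (snd p))"]
    by simp
  also have "\<dots> = (\<Sum>(r, s)\<in>decomps f \<times> decomps g. lookup a (bc_append (flat_comp (fst r)) (flat_comp (fst s)))
      * lookup b (bc_append (flat_comp (snd r)) (flat_comp (snd s))))"
  proof -
    have "lookup a (flat_comp (fst r + shift N (fst s))) * lookup b (flat_comp (snd r + shift N (snd s)))
        = lookup a (bc_append (flat_comp (fst r)) (flat_comp (fst s)))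
          * lookup b (bc_append (flat_comp (snd r)) (flat_comp (snd s)))" if "r \<in> decomps f" for r s
    proof -
      have "fst r + snd r = f" using that by (auto simp: decomps_def)
      then have "keys (fst r) \<subseteq> {..<N}" "keys (snd r) \<subseteq> {..<N}"
        using keys_summand kf by blast+
      then show ?thesis by (simp add: split)
    qed
    then show ?thesis by (intro sum.cong refl) auto
  qed
  also have "\<dots> = lookup (tmult (qcomul a) (qcomul b)) (flat_comp f, flat_comp g)"
    by (simp add: lookup_tmult_flat_comp lookup_qcomul sum.cartesian_product split_def)
  finally show "lookup (qcomul (qmult a b)) (\<gamma>, \<delta>) = lookup (tmult (qcomul a) (qcomul b)) (\<gamma>, \<delta>)"
    by (simp add: f_def g_def)
qed

lemma qcounit_qmult: "qcounit (qmult a b) = qcounit a * qcounit (b::'b bcomp \<Rightarrow>\<^sub>0 'k::comm_semiring_1)"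
proof -
  have "qcounit c = ser c 0" for c :: "'b bcomp \<Rightarrow>\<^sub>0 'k"
    by (simp add: qcounit_def ser_eq_lookup flat_comp_zero)
  then show ?thesis by (simp add: ser_qmult pmult_eq_sum_decomps decomps_zero)
qed

section \<open>The antipode\<close>

lemma jcomp_nonzero:
  "\<forall>j\<in>set J. 0 < j \<Longrightarrow> sum_list J = length xs \<Longrightarrow> 0 \<notin> set xs \<Longrightarrow> 0 \<notin> set (jcomp J (xs::'b list))"
proof (induction J arbitrary: xs)
  case (Cons j J)
  have "take j xs \<noteq> []" "0 \<notin> set (take j xs)"
    using Cons.prems by (auto dest: in_set_takeD)
  then have "sum_list (take j xs) \<noteq> 0" by (rule sum_list_nonzero)
  moreover have "0 \<notin> set (jcomp J (drop j xs))"
    using Cons.prems by (intro Cons.IH) (auto dest: in_set_dropD)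
  ultimately show ?case by simp
qed simp

lemma finite_index_seqs: "0 \<notin> set xs \<Longrightarrow> finite (index_seqs P (xs::'b list) h)"
proof -
  assume "0 \<notin> set xs"
  then have "index_seqs P xs h \<subseteq> {ix. set ix \<subseteq> keys h \<and> length ix = length xs}"
    using keys_monom by (auto simp: index_seqs_def)
  then show ?thesis by (rule finite_subset) (rule finite_lists_length_eq, simp)
qed

lemma pmult_card_index_seqs:
  assumes a: "0 \<notin> set \<alpha>" and b: "0 \<notin> set \<beta>"
  shows "pmult (\<lambda>h. of_nat (card (index_seqs P \<alpha> h))) (\<lambda>h. of_nat (card (index_seqs Q \<beta> h))) h
    = (of_nat (card (index_seqs (\<lambda>ks. P (take (length \<alpha>) ks) \<and> Q (drop (length \<alpha>) ks)) (\<alpha> @ (\<beta>::'b list)) h))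
        :: 'k::comm_semiring_1)"
proof -
  define m where "m = length \<alpha>"
  let ?A = "Sigma (decomps h) (\<lambda>p. index_seqs P \<alpha> (fst p) \<times> index_seqs Q \<beta> (snd p))"
  let ?B = "index_seqs (\<lambda>ks. P (take m ks) \<and> Q (drop m ks)) (\<alpha> @ \<beta>) h"
  have "pmult (\<lambda>h. of_nat (card (index_seqs P \<alpha> h))) (\<lambda>h. of_nat (card (index_seqs Q \<beta> h))) h
      = (\<Sum>p\<in>decomps h. of_nat (card (index_seqs P \<alpha> (fst p) \<times> index_seqs Q \<beta> (snd p))) :: 'k)"
    by (simp add: pmult_eq_sum_decomps card_cartesian_product)
  also have "\<dots> = of_nat (card ?A)"
    using finite_decomps finite_index_seqs[OF a] finite_index_seqs[OF b] by (simp add: card_SigmaI)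
  also have "card ?A = card ?B"
  proof (rule bij_betw_same_card[of "\<lambda>x. fst (snd x) @ snd (snd x)"], rule bij_betw_byWitness[where
        f' = "\<lambda>ks. ((monom (take m ks) \<alpha>, monom (drop m ks) \<beta>), (take m ks, drop m ks))"])
    show "(\<lambda>x. fst (snd x) @ snd (snd x)) ` ?A \<subseteq> ?B"
      by (auto simp: index_seqs_def m_def decomps_def monom_append_append)
    show "(\<lambda>ks. ((monom (take m ks) \<alpha>, monom (drop m ks) \<beta>), (take m ks, drop m ks))) ` ?B \<subseteq> ?A"
    proof (rule image_subsetI)
      fix ks assume ks: "ks \<in> ?B"
      then have "length ks = m + length \<beta>" "monom ks (\<alpha> @ \<beta>) = h"
        by (auto simp: index_seqs_def m_def)
      then have "monom (take m ks) \<alpha> + monom (drop m ks) \<beta> = h"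
        using monom_append_append[of "take m ks" \<alpha> "drop m ks" \<beta>] by (simp add: m_def)
      with ks show "((monom (take m ks) \<alpha>, monom (drop m ks) \<beta>), (take m ks, drop m ks)) \<in> ?A"
        by (auto simp: index_seqs_def decomps_def m_def)
    qed
  qed (auto simp: index_seqs_def m_def)
  finally show ?thesis by (simp add: m_def)
qed

lemma ser_qantipode_single:
  "ser (qantipode (Poly_Mapping.single \<beta> (1::'k::comm_ring_1))) h
     = (-1) ^ length (Rep_bcomp \<beta>) * of_nat (card (index_seqs (sorted_wrt (\<ge>)) (Rep_bcomp (\<beta>::'b bcomp)) h))"
proof -
  define n where "n = length (Rep_bcomp \<beta>)"
  define D where "D = rev (Rep_bcomp \<beta>)"
  have nz: "0 \<notin> set (jcomp J D)" if "J \<in> nat_compositions n" for J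
    using that nonzero_Rep_bcomp[of \<beta>]
    by (intro jcomp_nonzero) (auto simp: nat_compositions_def n_def D_def)
  have "qantipode (Poly_Mapping.single \<beta> (1::'k))
      = (\<Sum>J\<in>nat_compositions n. Poly_Mapping.single (Abs_bcomp (jcomp J D)) ((-1)^n))"
    unfolding qantipode_def
    by (subst sum_keys_single[where F = "\<lambda>a v. \<Sum>J\<in>nat_compositions (length (Rep_bcomp a)).
        Poly_Mapping.single (Abs_bcomp (jcomp J (rev (Rep_bcomp a)))) ((- 1) ^ length (Rep_bcomp a) * v)"])
      (simp_all add: n_def D_def)
  then have "ser (qantipode (Poly_Mapping.single \<beta> (1::'k))) h
      = (-1)^n * (\<Sum>J\<in>nat_compositions n. of_nat (card (index_seqs (sorted_wrt (<)) (jcomp J D) h)))"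
    using nz by (simp add: ser_sum ser_single sum_distrib_left Mser_eq_card_index_seqs Rep_bcomp_Abs_bcomp)
  also have "(\<Sum>J\<in>nat_compositions n. of_nat (card (index_seqs (sorted_wrt (<)) (jcomp J D) h)))
      = (of_nat (card (Sigma (nat_compositions n) (\<lambda>J. index_seqs (sorted_wrt (<)) (jcomp J D) h))) :: 'k)"
    using nz by (simp add: card_SigmaI finite_nat_compositions finite_index_seqs)
  also have "card (Sigma (nat_compositions n) (\<lambda>J. index_seqs (sorted_wrt (<)) (jcomp J D) h))
      = card (index_seqs (sorted_wrt (\<ge>)) (Rep_bcomp \<beta>) h)"
    using card_index_seqs_sorted[of D h] card_index_seqs_rev[of "Rep_bcomp \<beta>" h] by (simp add: n_def D_def)
  finally show ?thesis by (simp add: n_def)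
qed

lemma ser_conv_left:
  "ser (conv_left S (x::'b bcomp \<times> 'b bcomp \<Rightarrow>\<^sub>0 'k::comm_semiring_1)) h = (\<Sum>p\<in>keys x. lookup x p *
    pmult (ser (S (Poly_Mapping.single (fst p) 1))) (ser (Poly_Mapping.single (snd p) (1::'k))) h)"
  unfolding conv_left_def by (simp add: ser_sum ser_qsmult ser_qmult)

lemma ser_conv_right:
  "ser (conv_right S (x::'b bcomp \<times> 'b bcomp \<Rightarrow>\<^sub>0 'k::comm_semiring_1)) h = (\<Sum>p\<in>keys x. lookup x p *
    pmult (ser (Poly_Mapping.single (fst p) 1)) (ser (S (Poly_Mapping.single (snd p) (1::'k)))) h)"
  unfolding conv_right_def by (simp add: ser_sum ser_qsmult ser_qmult)

lemma ser_single_one: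
  "ser (Poly_Mapping.single (a::'b bcomp) (1::'k::comm_semiring_1)) = (\<lambda>h. of_nat (card (index_seqs (sorted_wrt (<)) (Rep_bcomp a) h)))"
  by (simp add: fun_eq_iff ser_single Mser_eq_card_index_seqs)

lemma nonzero_take_drop_Rep_bcomp:
  "0 \<notin> set (take i (Rep_bcomp a))" "0 \<notin> set (drop i (Rep_bcomp a))"
  using nonzero_Rep_bcomp[of a] by (auto dest: in_set_takeD in_set_dropD)

lemma pmult_qantipode_single:
  assumes i: "i \<le> length (Rep_bcomp (a::'b bcomp))"
  shows "pmult (ser (qantipode (Poly_Mapping.single (bc_take i a) (1::'k::comm_ring_1))))
      (ser (Poly_Mapping.single (bc_drop i a) 1)) h
    = (\<Sum>ks\<in>index_seqs (\<lambda>_. True) (Rep_bcomp a) h.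
        if sorted_wrt (\<ge>) (take i ks) \<and> sorted_wrt (<) (drop i ks) then (-1)^i else 0)"
proof -
  have "ser (qantipode (Poly_Mapping.single (bc_take i a) (1::'k)))
      = (\<lambda>h. (-1)^i * of_nat (card (index_seqs (sorted_wrt (\<ge>)) (take i (Rep_bcomp a)) h)))"
    using i by (simp add: fun_eq_iff ser_qantipode_single Rep_bc_take)
  then have "pmult (ser (qantipode (Poly_Mapping.single (bc_take i a) (1::'k))))
      (ser (Poly_Mapping.single (bc_drop i a) 1)) h
      = (-1)^i * of_nat (card (index_seqs (\<lambda>ks. sorted_wrt (\<ge>) (take i ks) \<and> sorted_wrt (<) (drop i ks))
          (Rep_bcomp a) h))"
    using i nonzero_take_drop_Rep_bcomp[of i a]
    by (simp add: ser_single_one Rep_bc_drop pmult_scale_left pmult_card_index_seqs)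
  then show ?thesis
    by (subst (asm) index_seqs_filter) (simp add: of_nat_card_filter finite_index_seqs[OF nonzero_Rep_bcomp])
qed

lemma pmult_single_qantipode:
  assumes i: "i \<le> length (Rep_bcomp (a::'b bcomp))"
  shows "pmult (ser (Poly_Mapping.single (bc_take i a) (1::'k::comm_ring_1)))
      (ser (qantipode (Poly_Mapping.single (bc_drop i a) 1))) h
    = (\<Sum>ks\<in>index_seqs (\<lambda>_. True) (Rep_bcomp a) h.
        if sorted_wrt (<) (take i ks) \<and> sorted_wrt (\<ge>) (drop i ks) then (-1)^(length (Rep_bcomp a) - i) else 0)"
proof -
  have "ser (qantipode (Poly_Mapping.single (bc_drop i a) (1::'k)))
      = (\<lambda>h. (-1)^(length (Rep_bcomp a) - i) * of_nat (card (index_seqs (sorted_wrt (\<ge>)) (drop i (Rep_bcomp a)) h)))"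
    by (simp add: fun_eq_iff ser_qantipode_single Rep_bc_drop)
  then have "pmult (ser (Poly_Mapping.single (bc_take i a) (1::'k)))
      (ser (qantipode (Poly_Mapping.single (bc_drop i a) 1))) h
      = (-1)^(length (Rep_bcomp a) - i) * of_nat (card (index_seqs
          (\<lambda>ks. sorted_wrt (<) (take i ks) \<and> sorted_wrt (\<ge>) (drop i ks)) (Rep_bcomp a) h))"
    using i nonzero_take_drop_Rep_bcomp[of i a]
    by (simp add: ser_single_one Rep_bc_take pmult_scale_right pmult_card_index_seqs min_absorb2)
  then show ?thesis
    by (subst (asm) index_seqs_filter) (simp add: of_nat_card_filter finite_index_seqs[OF nonzero_Rep_bcomp])
qed

lemma ser_qsmult_qcounit_qunit:
  "ser (qsmult (qcounit c) (qunit :: 'b bcomp \<Rightarrow>\<^sub>0 'k::comm_semiring_1)) h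
    = (\<Sum>a\<in>keys c. lookup c a * (if a = Abs_bcomp [] \<and> h = 0 then 1 else 0))"
proof -
  have "(\<Sum>a\<in>keys c. lookup c a * (if a = Abs_bcomp [] \<and> h = 0 then 1 else 0))
      = (\<Sum>a\<in>keys c. if a = Abs_bcomp [] then lookup c a * pone h else 0)"
    by (intro sum.cong refl) (simp add: pone_def)
  also have "\<dots> = ser (qsmult (qcounit c) (qunit :: 'b bcomp \<Rightarrow>\<^sub>0 'k)) h"
    by (simp add: sum_keys_delta ser_qsmult ser_qunit qcounit_def)
  finally show ?thesis ..
qed

lemma conv_left_qantipode:
  "conv_left qantipode (qcomul c) = qsmult (qcounit c) (qunit :: 'b bcomp \<Rightarrow>\<^sub>0 'k::comm_ring_1)"
proof (rule injD[OF inj_ser], rule ext)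
  fix h
  have "ser (conv_left qantipode (qcomul c)) h
    = (\<Sum>a\<in>keys c. lookup c a * (\<Sum>i\<in>{0..length (Rep_bcomp a)}.
         pmult (ser (qantipode (Poly_Mapping.single (bc_take i a) 1))) (ser (Poly_Mapping.single (bc_drop i a) (1::'k))) h))"
    unfolding ser_conv_left
    by (rule sum_qcomul[where T = "\<lambda>p. pmult (ser (qantipode (Poly_Mapping.single (fst p) 1)))
         (ser (Poly_Mapping.single (snd p) (1::'k))) h", simplified])
  also have "\<dots> = (\<Sum>a\<in>keys c. lookup c a * (if a = Abs_bcomp [] \<and> h = 0 then 1 else 0))"
  proof (intro sum.cong refl arg_cong2[where f = "(*)"])
    fix a :: "'b bcomp"
    have "(\<Sum>i\<in>{0..length (Rep_bcomp a)}.
        pmult (ser (qantipode (Poly_Mapping.single (bc_take i a) 1))) (ser (Poly_Mapping.single (bc_drop i a) (1::'k))) h)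
      = (\<Sum>i\<in>{0..length (Rep_bcomp a)}. \<Sum>ks\<in>index_seqs (\<lambda>_. True) (Rep_bcomp a) h.
          if sorted_wrt (\<ge>) (take i ks) \<and> sorted_wrt (<) (drop i ks) then (-1)^i else 0)"
      by (rule sum.cong[OF refl]) (simp add: pmult_qantipode_single)
    also have "\<dots> = (if a = Abs_bcomp [] \<and> h = 0 then 1 else 0)"
      by (subst sum_splits_index_seqs) (auto simp: transp_def Rep_bcomp_eq_Nil_iff)
    finally show "(\<Sum>i\<in>{0..length (Rep_bcomp a)}.
        pmult (ser (qantipode (Poly_Mapping.single (bc_take i a) 1))) (ser (Poly_Mapping.single (bc_drop i a) (1::'k))) h)
      = (if a = Abs_bcomp [] \<and> h = 0 then 1 else 0)" .
  qed
  finally show "ser (conv_left qantipode (qcomul c)) h = ser (qsmult (qcounit c) qunit) h"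
    by (simp add: ser_qsmult_qcounit_qunit)
qed

lemma conv_right_qantipode:
  "conv_right qantipode (qcomul c) = qsmult (qcounit c) (qunit :: 'b bcomp \<Rightarrow>\<^sub>0 'k::comm_ring_1)"
proof (rule injD[OF inj_ser], rule ext)
  fix h
  have "ser (conv_right qantipode (qcomul c)) h
    = (\<Sum>a\<in>keys c. lookup c a * (\<Sum>i\<in>{0..length (Rep_bcomp a)}.
         pmult (ser (Poly_Mapping.single (bc_take i a) 1)) (ser (qantipode (Poly_Mapping.single (bc_drop i a) (1::'k)))) h))"
    unfolding ser_conv_right
    by (rule sum_qcomul[where T = "\<lambda>p. pmult (ser (Poly_Mapping.single (fst p) 1))
         (ser (qantipode (Poly_Mapping.single (snd p) (1::'k)))) h", simplified])
  also have "\<dots> = (\<Sum>a\<in>keys c. lookup c a * (if a = Abs_bcomp [] \<and> h = 0 then 1 else 0))"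
  proof (intro sum.cong refl arg_cong2[where f = "(*)"])
    fix a :: "'b bcomp"
    let ?n = "length (Rep_bcomp a)"
    have "(\<Sum>i\<in>{0..?n}.
        pmult (ser (Poly_Mapping.single (bc_take i a) 1)) (ser (qantipode (Poly_Mapping.single (bc_drop i a) (1::'k)))) h)
      = (\<Sum>i\<in>{0..?n}. \<Sum>ks\<in>index_seqs (\<lambda>_. True) (Rep_bcomp a) h.
          if sorted_wrt (<) (take i ks) \<and> sorted_wrt (\<ge>) (drop i ks) then (-1)^(?n - i) else 0)"
      by (rule sum.cong[OF refl]) (simp add: pmult_single_qantipode)
    also have "\<dots> = (if a = Abs_bcomp [] \<and> h = 0 then 1 else 0)"
    proof (subst sum_splits_index_seqs)
      fix j assume "j < ?n"
      then have "?n - j = Suc (?n - Suc j)" by simp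
      then show "(-1::'k) ^ (?n - j) + (-1) ^ (?n - Suc j) = 0" by simp
    qed (auto simp: transp_def Rep_bcomp_eq_Nil_iff Rep_bcomp_Nil)
    finally show "(\<Sum>i\<in>{0..?n}.
        pmult (ser (Poly_Mapping.single (bc_take i a) 1)) (ser (qantipode (Poly_Mapping.single (bc_drop i a) (1::'k)))) h)
      = (if a = Abs_bcomp [] \<and> h = 0 then 1 else 0)" .
  qed
  finally show "ser (conv_right qantipode (qcomul c)) h = ser (qsmult (qcounit c) qunit) h"
    by (simp add: ser_qsmult_qcounit_qunit)
qed

end

theorem proposition2p5:
  assumes Q_in_k: "\<forall>n::nat. 0 < n \<longrightarrow> (\<exists>y::'k::comm_ring_1. of_nat n * y = 1)"
    and add_finite: "\<forall>a::'b::comm_monoid_add. finite {(b, c). b + c = a}"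
    and nonzero_closed: "\<forall>b c::'b. b \<noteq> 0 \<longrightarrow> c \<noteq> 0 \<longrightarrow> b + c \<noteq> 0"
  shows
    \<comment> \<open>QSym_B is a subalgebra of k[[X]]_B with basis (M_alpha)\<close>
    "inj (ser :: ('b bcomp \<Rightarrow>\<^sub>0 'k) \<Rightarrow> _)
   \<and> ser (qunit :: ('b bcomp \<Rightarrow>\<^sub>0 'k)) = pone
   \<and> (\<forall>a b :: 'b bcomp \<Rightarrow>\<^sub>0 'k. \<exists>c. ser c = pmult (ser a) (ser b))
    \<comment> \<open>algebra axioms\<close>
   \<and> (\<forall>a b c :: 'b bcomp \<Rightarrow>\<^sub>0 'k. qmult (qmult a b) c = qmult a (qmult b c))
   \<and> (\<forall>a :: 'b bcomp \<Rightarrow>\<^sub>0 'k. qmult qunit a = a \<and> qmult a qunit = a)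
   \<and> (\<forall>a b c :: 'b bcomp \<Rightarrow>\<^sub>0 'k. qmult (a + b) c = qmult a c + qmult b c
                                  \<and> qmult c (a + b) = qmult c a + qmult c b)
   \<and> (\<forall>(r::'k) (a :: 'b bcomp \<Rightarrow>\<^sub>0 'k) b. qmult (qsmult r a) b = qsmult r (qmult a b)
                                  \<and> qmult a (qsmult r b) = qsmult r (qmult a b))
    \<comment> \<open>coalgebra axioms\<close>
   \<and> (\<forall>c :: 'b bcomp \<Rightarrow>\<^sub>0 'k. comul_left (qcomul c) = comul_right (qcomul c))
   \<and> (\<forall>c :: 'b bcomp \<Rightarrow>\<^sub>0 'k. counit_left (qcomul c) = c \<and> counit_right (qcomul c) = c)
    \<comment> \<open>bialgebra compatibility\<close>
   \<and> (\<forall>a b :: 'b bcomp \<Rightarrow>\<^sub>0 'k. qcomul (qmult a b) = tmult (qcomul a) (qcomul b))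
   \<and> qcomul (qunit :: 'b bcomp \<Rightarrow>\<^sub>0 'k) = tunit
   \<and> (\<forall>a b :: 'b bcomp \<Rightarrow>\<^sub>0 'k. qcounit (qmult a b) = qcounit a * qcounit b)
   \<and> qcounit (qunit :: 'b bcomp \<Rightarrow>\<^sub>0 'k) = 1
    \<comment> \<open>the given S_B is an antipode\<close>
   \<and> (\<forall>c :: 'b bcomp \<Rightarrow>\<^sub>0 'k. conv_left qantipode (qcomul c) = qsmult (qcounit c) qunit
                              \<and> conv_right qantipode (qcomul c) = qsmult (qcounit c) qunit)"
proof -
  interpret exponent_monoid
  proof
    show "\<And>b c::'b. b \<noteq> 0 \<Longrightarrow> c \<noteq> 0 \<Longrightarrow> b + c \<noteq> 0" using nonzero_closed by blast
    show "\<And>a::'b. finite {(b, c). b + c = a}" using add_finite by blast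
  qed
  show ?thesis
    by (intro conjI allI inj_ser ser_qunit qsym_pmult qmult_assoc qmult_qunit_left qmult_qunit_right
        qmult_add_left qmult_add_right qmult_qsmult_left qmult_qsmult_right comul_left_qcomul
        counit_left_qcomul counit_right_qcomul qcomul_qmult qcomul_qunit qcounit_qmult qcounit_qunit
        conv_left_qantipode conv_right_qantipode)
qed

end
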